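(* Let $\mathfrak{A}$ be an atomic weakly associative relation algebra and let $\mathfrak{B}=\langle B,T_\kappa,E_{\kappa\lambda}\rangle_{\kappa,\lambda<3}$ be its suitable structure. Then $\mathfrak{Cm}\,\mathfrak{B}\cong\mathfrak{Rc}\,\mathfrak{B}$, via the map $R$ defined for $X\subseteq B$ by $R(X)=\bigcup_{t\in X}R_t$.
   Context: WA: algebras $\langle A,+,\overline{\phantom{x}},;,\breve{\phantom{x}},1'\rangle$ with $x\cdot y=\overline{\overline{x}+\overline{y}}$, $0'=\overline{1'}$, $1=1'+0'$, $0=\overline{1}$, satisfying for all $x,y,z$: $x+y=y+x$; $x+(y+z)=(x+y)+z$; $\overline{\overline{x}+\overline{y}}+\overline{\overline{x}+y}=x$; $((x\cdot 1');1);1=(x\cdot1');1$; $(x+y);z=x;z+y;z$; $x;1'=x$; $\breve{\breve{x}}=x$; $\breve{(x+y)}=\breve{x}+\breve{y}$; $\breve{(x;y)}=\breve{y};\breve{x}$; $\breve{x};\overline{x;y}+\overline{y}=\overline{y}$. $\mathrm{At}(\mathfrak{A})$ = set of atoms. Suitable structure: $B=\{s\in{}^3\mathrm{At}(\mathfrak{A}): s_2;s_0\ge s_1\}$; $T_\kappa=\{\langle s,t\rangle\in B\times B:s_\kappa=t_\kappa\}$; $E_{\kappa\kappa}=B$; for distinct $\kappa,\lambda$ with third index $\mu$, $E_{\kappa\lambda}=\{s\in B:s_\mu\le1'\}$. Complex algebra: $\mathfrak{Cm}\,\mathfrak{B}=\langle\mathcal{P}(B),\cup,\cap,B\setminus\cdot,\emptyset,B,T_\kappa^*,E_{\kappa\lambda}\rangle_{\kappa,\lambda<3}$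 with $T_\kappa^*(X)=\{y\in B:\exists x\in X\ \langle y,x\rangle\in T_\kappa\}$. Trails: a $\mathfrak{B}$-trail is $p=\langle t_0,\kappa_0,\dots,t_n,\kappa_n\rangle$, $n\in\omega$, $t_i\in B$, $\kappa_i<3$, with $t_i\ne t_{i+1}$ and $\langle t_i,t_{i+1}\rangle\in T_{\kappa_i}$ for $i<n$; it ends at $t_n$. $\mathrm{Tr}(\mathfrak{B})$ = set of trails; $p\lambda=\langle t_0,\kappa_0,\dots,t_n,\lambda\rangle$. $\approx$ is the smallest equivalence relation on $\mathrm{Tr}(\mathfrak{B})$ with (for trails of the displayed forms): (a) $\langle t_0,\kappa_0,\dots,t_i,\lambda,s,\lambda,t_i,\kappa_i,\dots,t_n,\kappa_n\rangle\approx\langle t_0,\kappa_0,\dots,t_i,\kappa_i,\dots,t_n,\kappa_n\rangle$; (b) $\langle t_0,\kappa_0,\dots,t_n,\lambda,s,\nu\rangle\approx\langle t_0,\kappa_0,\dots,t_n,\nu\rangle$ if $\lambda\ne\nu$; (c) $\langle t_0,\kappa_0,\dots,t_n,\lambda\rangle\approx\langle t_0,\kappa_0,\dots,t_n,\kappa_n\rangle$ if $t_n\in E_{\lambda\kappa_n}$. $p^{\mathfrak{B}}$ = $\approx$-class of $p$; $U(\mathfrak{B})=\{p^{\mathfrak{B}}:p\in\mathrm{Tr}(\mathfrak{B})\}$; $R_t=\{\langle(p0)^{\mathfrak{B}},(p1)^{\mathfrak{B}},(p2)^{\mathfrak{B}}\rangle:p\in\mathrm{Tr}(\mathfrak{B})\text{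 ends at }t\}$; $V(\mathfrak{B})=\bigcup_{t\in B}R_t$. Set algebras: the full 3-dimensional cylindric set algebra on $U$ is $\langle\mathcal{P}({}^3U),\cup,{}^3U\setminus\cdot,C_\kappa,D_{\kappa\lambda}\rangle_{\kappa,\lambda<3}$ with $C_\kappa X=\{v\in{}^3U:\exists u\in X\ \forall\lambda\ne\kappa\ u_\lambda=v_\lambda\}$ and $D_{\kappa\lambda}=\{v\in{}^3U:v_\kappa=v_\lambda\}$. Let $\mathfrak{C}$ be the subalgebra of the full cylindric set algebra on $U(\mathfrak{B})$ completely generated by $\{R_t:t\in B\}$ (closed under arbitrary unions). $\mathfrak{Rc}\,\mathfrak{B}$ is the relativization of $\mathfrak{C}$ to $V=V(\mathfrak{B})$: universe $\{X\in C:X\subseteq V\}$, operations $\cup$, $V\setminus\cdot$, $C^{[V]}_\kappa X=V\cap C_\kappa X$, constants $D^{[V]}_{\kappa\lambda}=V\cap D_{\kappa\lambda}$. *)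

theory Defs
  imports Main
begin

record 'a ra_sig =
  wcar   :: "'a set"
  wplus  :: "'a \<Rightarrow> 'a \<Rightarrow> 'a"
  wcompl :: "'a \<Rightarrow> 'a"
  wcomp  :: "'a \<Rightarrow> 'a \<Rightarrow> 'a"
  wconv  :: "'a \<Rightarrow> 'a"
  wid    :: 'a

definition wmeet :: "'a ra_sig \<Rightarrow> 'a \<Rightarrow> 'a \<Rightarrow> 'a" where
  "wmeet A x y = wcompl A (wplus A (wcompl A x) (wcompl A y))"

definition wdiv :: "'a ra_sig \<Rightarrow> 'a" where
  "wdiv A = wcompl A (wid A)"

definition wone :: "'a ra_sig \<Rightarrow> 'a" where
  "wone A = wplus A (wid A) (wdiv A)"

definition wzero :: "'a ra_sig \<Rightarrow> 'a" where
  "wzero A = wcompl A (wone A)"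

definition wle :: "'a ra_sig \<Rightarrow> 'a \<Rightarrow> 'a \<Rightarrow> bool" where
  "wle A x y \<longleftrightarrow> wplus A x y = y"

definition WA :: "'a ra_sig \<Rightarrow> bool" where
  "WA A \<longleftrightarrow>
     wid A \<in> wcar A \<and>
     (\<forall>x\<in>wcar A. \<forall>y\<in>wcar A. wplus A x y \<in> wcar A \<and> wcomp A x y \<in> wcar A) \<and>
     (\<forall>x\<in>wcar A. wcompl A x \<in> wcar A \<and> wconv A x \<in> wcar A) \<and>
     (\<forall>x\<in>wcar A. \<forall>y\<in>wcar A. \<forall>z\<in>wcar A.
        wplus A x y = wplus A y x \<and>
        wplus A x (wplus A y z) = wplus A (wplus A x y) z \<and>
        wplus A (wcompl A (wplus A (wcompl A x) (wcompl A y)))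
                (wcompl A (wplus A (wcompl A x) y)) = x \<and>
        wcomp A (wcomp A (wmeet A x (wid A)) (wone A)) (wone A)
          = wcomp A (wmeet A x (wid A)) (wone A) \<and>
        wcomp A (wplus A x y) z = wplus A (wcomp A x z) (wcomp A y z) \<and>
        wcomp A x (wid A) = x \<and>
        wconv A (wconv A x) = x \<and>
        wconv A (wplus A x y) = wplus A (wconv A x) (wconv A y) \<and>
        wconv A (wcomp A x y) = wcomp A (wconv A y) (wconv A x) \<and>
        wplus A (wcomp A (wconv A x) (wcompl A (wcomp A x y))) (wcompl A y)
          = wcompl A y)"

definition At :: "'a ra_sig \<Rightarrow> 'a set" where
  "At A = {a \<in> wcar A. a \<noteq> wzero A \<and>
             (\<forall>y\<in>wcar A. wle A y a \<longrightarrow> y = wzero A \<or> y = a)}"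

definition atomic :: "'a ra_sig \<Rightarrow> bool" where
  "atomic A \<longleftrightarrow> (\<forall>x\<in>wcar A. x \<noteq> wzero A \<longrightarrow> (\<exists>a\<in>At A. wle A a x))"

text \<open>A 3-sequence \<open>s \<in> ^3X\<close> is represented as a triple; \<open>tr s i\<close> is \<open>s_i\<close>.\<close>

definition tr :: "'b \<times> 'b \<times> 'b \<Rightarrow> nat \<Rightarrow> 'b" where
  "tr s i = (if i = 0 then fst s else if i = 1 then fst (snd s) else snd (snd s))"

type_synonym 'a tri = "'a \<times> 'a \<times> 'a"

definition SB :: "'a ra_sig \<Rightarrow> 'a tri set" where
  "SB A = {s. tr s 0 \<in> At A \<and> tr s 1 \<in> At A \<and> tr s 2 \<in> At A \<and>
              wle A (tr s 1) (wcomp A (tr s 2) (tr s 0))}"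

definition ST :: "'a ra_sig \<Rightarrow> nat \<Rightarrow> ('a tri \<times> 'a tri) set" where
  "ST A k = {(s, t). s \<in> SB A \<and> t \<in> SB A \<and> tr s k = tr t k}"

text \<open>For distinct \<open>k, l < 3\<close> the third index is \<open>3 - k - l\<close>.\<close>
definition SE :: "'a ra_sig \<Rightarrow> nat \<Rightarrow> nat \<Rightarrow> 'a tri set" where
  "SE A k l = (if k = l then SB A else {s \<in> SB A. wle A (tr s (3 - k - l)) (wid A)})"

definition Tstar :: "'a ra_sig \<Rightarrow> nat \<Rightarrow> 'a tri set \<Rightarrow> 'a tri set" where
  "Tstar A k X = {y \<in> SB A. \<exists>x\<in>X. (y, x) \<in> ST A k}"

record 'x cyl_alg =
  cuniv :: "'x set"
  cjoin :: "'x \<Rightarrow> 'x \<Rightarrow> 'x"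
  cmeet :: "'x \<Rightarrow> 'x \<Rightarrow> 'x"
  ccompl :: "'x \<Rightarrow> 'x"
  cbot :: 'x
  ctop :: 'x
  ccyl :: "nat \<Rightarrow> 'x \<Rightarrow> 'x"
  cdiag :: "nat \<Rightarrow> nat \<Rightarrow> 'x"

definition cyl_iso :: "('x \<Rightarrow> 'y) \<Rightarrow> 'x cyl_alg \<Rightarrow> 'y cyl_alg \<Rightarrow> bool" where
  "cyl_iso h A A' \<longleftrightarrow>
     bij_betw h (cuniv A) (cuniv A') \<and>
     (\<forall>x\<in>cuniv A. \<forall>y\<in>cuniv A.
        h (cjoin A x y) = cjoin A' (h x) (h y) \<and>
        h (cmeet A x y) = cmeet A' (h x) (h y)) \<and>
     (\<forall>x\<in>cuniv A. h (ccompl A x) = ccompl A' (h x)) \<and>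
     h (cbot A) = cbot A' \<and> h (ctop A) = ctop A' \<and>
     (\<forall>k<3. \<forall>x\<in>cuniv A. h (ccyl A k x) = ccyl A' k (h x)) \<and>
     (\<forall>k<3. \<forall>l<3. h (cdiag A k l) = cdiag A' k l)"

definition Cm :: "'a ra_sig \<Rightarrow> 'a tri set cyl_alg" where
  "Cm A = \<lparr> cuniv = Pow (SB A), cjoin = (\<union>), cmeet = (\<inter>),
            ccompl = (\<lambda>X. SB A - X), cbot = {}, ctop = SB A,
            ccyl = Tstar A, cdiag = SE A \<rparr>"

type_synonym 'a trail = "('a tri \<times> nat) list"

text \<open>A trail \<open>\<langle>t_0,k_0,...,t_n,k_n\<rangle>\<close> is the nonempty list \<open>[(t_0,k_0),...,(t_n,k_n)]\<close>.\<close>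
definition is_trail :: "'a ra_sig \<Rightarrow> 'a trail \<Rightarrow> bool" where
  "is_trail A p \<longleftrightarrow> p \<noteq> [] \<and>
     (\<forall>i<length p. fst (p ! i) \<in> SB A \<and> snd (p ! i) < 3) \<and>
     (\<forall>i. Suc i < length p \<longrightarrow>
        fst (p ! i) \<noteq> fst (p ! Suc i) \<and> (fst (p ! i), fst (p ! Suc i)) \<in> ST A (snd (p ! i)))"

definition Tr :: "'a ra_sig \<Rightarrow> 'a trail set" where
  "Tr A = {p. is_trail A p}"

text \<open>The generating pairs (a), (b), (c) of the relation \<open>\<approx>\<close> (between trails).\<close>
inductive trail_step :: "'a ra_sig \<Rightarrow> 'a trail \<Rightarrow> 'a trail \<Rightarrow> bool" for A where
  ruleA: "\<lbrakk> is_trail A (xs @ [(t, l), (s, l), (t, k)] @ ys); is_trail A (xs @ [(t, k)] @ ys) \<rbrakk>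
          \<Longrightarrow> trail_step A (xs @ [(t, l), (s, l), (t, k)] @ ys) (xs @ [(t, k)] @ ys)"
| ruleB: "\<lbrakk> is_trail A (xs @ [(t, l), (s, v)]); is_trail A (xs @ [(t, v)]); l \<noteq> v \<rbrakk>
          \<Longrightarrow> trail_step A (xs @ [(t, l), (s, v)]) (xs @ [(t, v)])"
| ruleC: "\<lbrakk> is_trail A (xs @ [(t, l)]); is_trail A (xs @ [(t, k)]); t \<in> SE A l k \<rbrakk>
          \<Longrightarrow> trail_step A (xs @ [(t, l)]) (xs @ [(t, k)])"

inductive trail_eq :: "'a ra_sig \<Rightarrow> 'a trail \<Rightarrow> 'a trail \<Rightarrow> bool" for A where
  te_refl: "is_trail A p \<Longrightarrow> trail_eq A p p"
| te_step: "trail_step A p q \<Longrightarrow> trail_eq A p q"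
| te_sym: "trail_eq A p q \<Longrightarrow> trail_eq A q p"
| te_trans: "trail_eq A p q \<Longrightarrow> trail_eq A q r \<Longrightarrow> trail_eq A p r"

definition cls :: "'a ra_sig \<Rightarrow> 'a trail \<Rightarrow> 'a trail set" where
  "cls A p = {q. trail_eq A p q}"

definition relab :: "'a trail \<Rightarrow> nat \<Rightarrow> 'a trail" where
  "relab p l = butlast p @ [(fst (last p), l)]"

definition UB :: "'a ra_sig \<Rightarrow> 'a trail set set" where
  "UB A = cls A ` Tr A"

definition Rt :: "'a ra_sig \<Rightarrow> 'a tri \<Rightarrow> 'a trail set tri set" where
  "Rt A t = {(cls A (relab p 0), cls A (relab p 1), cls A (relab p 2)) | p.
               is_trail A p \<and> fst (last p) = t}"

definition VB :: "'a ra_sig \<Rightarrow> 'a trail set tri set" where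
  "VB A = (\<Union>t\<in>SB A. Rt A t)"

definition U3 :: "'a ra_sig \<Rightarrow> 'a trail set tri set" where
  "U3 A = UB A \<times> UB A \<times> UB A"

definition cylU :: "'a ra_sig \<Rightarrow> nat \<Rightarrow> 'a trail set tri set \<Rightarrow> 'a trail set tri set" where
  "cylU A k X = {v \<in> U3 A. \<exists>u\<in>X. \<forall>l<3. l \<noteq> k \<longrightarrow> tr u l = tr v l}"

definition diagU :: "'a ra_sig \<Rightarrow> nat \<Rightarrow> nat \<Rightarrow> 'a trail set tri set" where
  "diagU A k l = {v \<in> U3 A. tr v k = tr v l}"

inductive_set Cgen :: "'a ra_sig \<Rightarrow> 'a trail set tri set set" for A where
  gen: "t \<in> SB A \<Longrightarrow> Rt A t \<in> Cgen A"
| union: "(\<And>X. X \<in> S \<Longrightarrow> X \<in> Cgen A) \<Longrightarrow> \<Union>S \<in> Cgen A"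
| compl: "X \<in> Cgen A \<Longrightarrow> U3 A - X \<in> Cgen A"
| cyl: "X \<in> Cgen A \<Longrightarrow> k < 3 \<Longrightarrow> cylU A k X \<in> Cgen A"
| diag: "k < 3 \<Longrightarrow> l < 3 \<Longrightarrow> diagU A k l \<in> Cgen A"

definition Rc :: "'a ra_sig \<Rightarrow> 'a trail set tri set cyl_alg" where
  "Rc A = \<lparr> cuniv = {X \<in> Cgen A. X \<subseteq> VB A}, cjoin = (\<union>), cmeet = (\<inter>),
            ccompl = (\<lambda>X. VB A - X), cbot = {}, ctop = VB A,
            ccyl = (\<lambda>k X. VB A \<inter> cylU A k X), cdiag = (\<lambda>k l. VB A \<inter> diagU A k l) \<rparr>"

definition Rmap :: "'a ra_sig \<Rightarrow> 'a tri set \<Rightarrow> 'a trail set tri set" where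
  "Rmap A X = (\<Union>t\<in>X. Rt A t)"

end

theory Submission
  imports Defs
begin

text \<open>The map \<open>R\<close> is an isomorphism onto \<open>Rc\<close> because the sets \<open>R_t\<close> are nonempty and pairwise
  disjoint, every generated set inside \<open>V\<close> is a union of them, and cylindrification and the
  diagonals act on them as \<open>T\<^sub>\<kappa>\<^sup>*\<close> and \<open>E\<^sub>\<kappa>\<^sub>\<lambda>\<close> act on triangles.

  Disjointness and the converse inclusions rest on an invariant of \<open>\<approx>\<close>: walking along a trail
  while cancelling backtracks (generator (a)) leaves a reduced stack of steps, and climbing back
  along this stack as far as the \<open>E\<close>-class of the current label allows (generators (b), (c)) gives
  a normal form. The normal forms of \<open>p0, p1, p2\<close> determine the atoms on the three edges of the
  triangle at which \<open>p\<close> ends, hence the triangle; reading the identity atoms at the corners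
  needs the domain of an atom, which is where atomicity and weak associativity enter.

  A generated set meets \<open>R_t\<close> only if it contains it: for trails \<open>p, p'\<close> ending at \<open>t\<close>, rerouting every
  trail through the loop along \<open>p'\<close> and back along \<open>p\<close> is a permutation of \<open>U\<close> that fixes every
  \<open>R_s\<close>, hence every generated set, and moves the point of \<open>p\<close> to that of \<open>p'\<close>.\<close>

lemma less_3_cases: "k < (3::nat) \<Longrightarrow> k = 0 \<or> k = 1 \<or> k = 2" by auto

lemma all_less_3: "(\<forall>l<(3::nat). P l) \<longleftrightarrow> P 0 \<and> P 1 \<and> P 2"
  by (auto dest: less_3_cases)

lemma tr_eqI: "tr s 0 = tr t 0 \<Longrightarrow> tr s 1 = tr t 1 \<Longrightarrow> tr s 2 = tr t 2 \<Longrightarrow> s = t"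
  unfolding tr_def by (simp add: prod_eq_iff)

lemma tr_triple: "l < 3 \<Longrightarrow> tr (f 0, f 1, f 2) l = f l"
  using less_3_cases[of l] by (auto simp: tr_def)

definition map_tri :: "('x \<Rightarrow> 'x) \<Rightarrow> 'x \<times> 'x \<times> 'x \<Rightarrow> 'x \<times> 'x \<times> 'x" where
  "map_tri f w = (f (fst w), f (fst (snd w)), f (snd (snd w)))"

lemma tr_map_tri: "l < 3 \<Longrightarrow> tr (map_tri f w) l = f (tr w l)"
  unfolding map_tri_def tr_def by auto

lemma complementary_pair:
  "k < (3::nat) \<Longrightarrow> \<exists>i j. i < 3 \<and> j < 3 \<and> i \<noteq> j \<and> i \<noteq> k \<and> j \<noteq> k \<and> 3 - i - j = k"
proof -
  assume "k < 3"
  then consider "k = 0" | "k = 1" | "k = 2" by linarith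
  then show ?thesis
  proof cases
    case 1 then show ?thesis by (intro exI[of _ 1] exI[of _ 2]) simp
  next
    case 2 then show ?thesis by (intro exI[of _ 0] exI[of _ 2]) simp
  next
    case 3 then show ?thesis by (intro exI[of _ 0] exI[of _ 1]) simp
  qed
qed

locale huntington =
  fixes K :: "'a set" and p :: "'a \<Rightarrow> 'a \<Rightarrow> 'a" and n :: "'a \<Rightarrow> 'a" and c0 :: 'a
  assumes join_closed: "x \<in> K \<Longrightarrow> y \<in> K \<Longrightarrow> p x y \<in> K"
    and compl_closed: "x \<in> K \<Longrightarrow> n x \<in> K"
    and c0: "c0 \<in> K"
    and join_comm: "x \<in> K \<Longrightarrow> y \<in> K \<Longrightarrow> p x y = p y x"
    and join_assoc: "x \<in> K \<Longrightarrow> y \<in> K \<Longrightarrow> z \<in> K \<Longrightarrow> p x (p y z) = p (p x y) z"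
    and huntington: "x \<in> K \<Longrightarrow> y \<in> K \<Longrightarrow> p (n (p (n x) (n y))) (n (p (n x) y)) = x"
begin

definition top where "top = p c0 (n c0)"
definition bot where "bot = n top"
definition le where "le x y \<longleftrightarrow> p x y = y"
definition meet where "meet x y = n (p (n x) (n y))"

lemma join_compl_indep:
  assumes a: "a \<in> K" and b: "b \<in> K"
  shows "p a (n a) = p b (n b)"
proof -
  note cl = join_closed compl_closed
  have swap: "p (n (p (n y) x)) x = p y (n (p (n x) (n (n y))))" if "x \<in> K" "y \<in> K" for x y
  proof -
    have "p (n (p (n y) x)) x = p (n (p (n y) x)) (p (n (p (n x) (n (n y)))) (n (p (n x) (n y))))"
      using huntington[of x "n y"] that cl by simp
    also have "\<dots> = p (p (n (p (n y) (n x))) (n (p (n y) x))) (n (p (n x) (n (n y))))"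
      using that cl join_comm join_assoc by (smt (verit))
    also have "\<dots> = p y (n (p (n x) (n (n y))))" using huntington[of y x] that by simp
    finally show ?thesis .
  qed
  define c where "c = n (p (n b) (n (n a)))"
  have c: "c \<in> K" unfolding c_def using a b cl by simp
  have "p a (p (n (p (n (n b)) (n (n a)))) c) = p (p a (n (p (n (n b)) (n (n a))))) c"
    using a b c cl join_assoc by simp
  also have "\<dots> = p (p (n (p (n a) (n b))) (n b)) c" using swap[of "n b" a] a b cl by simp
  also have "\<dots> = p (n b) (p (n (p (n a) (n b))) c)"
    using a b c cl join_assoc join_comm[of "n b" "n (p (n a) (n b))"] by simp
  also have "p (n (p (n a) (n b))) c = b"
    unfolding c_def using huntington[of b "n a"] a b cl join_comm by metis
  also have "p (n (p (n (n b)) (n (n a)))) c = n a"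
    unfolding c_def using huntington[of "n a" "n b"] a b cl join_comm by metis
  finally show ?thesis using a b join_comm cl by metis
qed

lemma top_closed: "top \<in> K" unfolding top_def using c0 join_closed compl_closed by simp
lemma bot_closed: "bot \<in> K" unfolding bot_def using top_closed compl_closed by simp
lemma join_compl_top: "a \<in> K \<Longrightarrow> p a (n a) = top" unfolding top_def using join_compl_indep c0 by blast
lemma compl_join_top: "a \<in> K \<Longrightarrow> p (n a) a = top" using join_compl_top join_comm compl_closed by metis

lemma compl_compl:
  assumes a: "a \<in> K"
  shows "n (n a) = a"
proof -
  have nn: "n b = p bot (n (p (n (n b)) b))" if "b \<in> K" for b
  proof -
    have "p (n (p (n (n b)) (n b))) (n (p (n (n b)) b)) = n b"
      using huntington[of "n b" b] that compl_closed by simp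
    then show ?thesis using compl_join_top[of "n b"] that compl_closed unfolding bot_def by simp
  qed
  have "n (n a) = p bot (n (p (n a) (n (n (n a)))))"
    using nn[of "n a"] a compl_closed join_comm by simp
  also have "\<dots> = p (n (p (n a) (n (n (n a))))) bot"
    using join_comm bot_closed a compl_closed join_closed by simp
  also have "\<dots> = a"
    using huntington[of a "n (n a)"] a compl_closed join_compl_top[of "n a"] unfolding bot_def by simp
  finally show ?thesis .
qed

lemma join_top: "b \<in> K \<Longrightarrow> p b top = top"
proof -
  have top_eq: "p b top = p top bot" if b: "b \<in> K" for b
  proof -
    have "p top (n (p b (n b))) = p (p b (n (n b))) (n b)"
      using huntington[of "n b" "n b"] b compl_closed compl_compl join_assoc join_closed
        join_compl_top by metis
    also have "\<dots> = p b top"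
      using compl_compl b join_assoc compl_closed join_closed join_compl_top by metis
    finally show ?thesis using join_compl_top b unfolding bot_def by simp
  qed
  have "p bot top = top"
    using join_compl_top[OF bot_closed] compl_compl top_closed unfolding bot_def by simp
  then show "b \<in> K \<Longrightarrow> p b top = top" using top_eq top_eq[OF bot_closed] by simp
qed

lemma join_bot:
  assumes x: "x \<in> K"
  shows "p x bot = x"
proof -
  have "p bot bot = bot"
    using huntington[of bot bot] bot_closed compl_compl top_closed join_top join_comm
    unfolding bot_def by metis
  define y where "y = n (p (n x) bot)"
  have y: "y \<in> K" unfolding y_def using x compl_closed join_closed bot_closed by simp
  have e: "p bot y = x"
    using huntington[of x top] x top_closed join_top compl_closed join_comm bot_closed y
    unfolding y_def bot_def by metis
  have "p x bot = p bot (p bot y)"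
    using e y bot_closed join_assoc join_comm by metis
  also have "\<dots> = x" using \<open>p bot bot = bot\<close> e y bot_closed join_assoc by metis
  finally show ?thesis .
qed

lemma join_idem: "x \<in> K \<Longrightarrow> p x x = x"
proof -
  have nn: "n (p (n y) (n y)) = y" if "y \<in> K" for y
    using huntington[of y y] compl_join_top that join_bot compl_closed join_closed
    unfolding bot_def by simp
  assume x: "x \<in> K"
  then have "n (p x x) = n x" using nn[of "n x"] compl_compl compl_closed by simp
  then show ?thesis using compl_compl[of "p x x"] compl_compl[of x] x join_closed by simp
qed

lemma le_refl: "x \<in> K \<Longrightarrow> le x x" unfolding le_def using join_idem .
lemma le_antisym: "x \<in> K \<Longrightarrow> y \<in> K \<Longrightarrow> le x y \<Longrightarrow> le y x \<Longrightarrow> x = y"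
  unfolding le_def using join_comm by metis
lemma le_trans: "x \<in> K \<Longrightarrow> y \<in> K \<Longrightarrow> z \<in> K \<Longrightarrow> le x y \<Longrightarrow> le y z \<Longrightarrow> le x z"
  unfolding le_def using join_assoc by metis
lemma le_join1: "x \<in> K \<Longrightarrow> y \<in> K \<Longrightarrow> le x (p x y)"
  unfolding le_def using join_assoc join_idem by metis
lemma le_join2: "x \<in> K \<Longrightarrow> y \<in> K \<Longrightarrow> le y (p x y)"
  unfolding le_def using join_assoc join_idem join_comm join_closed by metis
lemma join_lub: "x \<in> K \<Longrightarrow> y \<in> K \<Longrightarrow> z \<in> K \<Longrightarrow> le x z \<Longrightarrow> le y z \<Longrightarrow> le (p x y) z"
  unfolding le_def using join_assoc by metis
lemma bot_le: "x \<in> K \<Longrightarrow> le bot x" unfolding le_def using join_bot join_comm bot_closed by metis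
lemma le_top: "x \<in> K \<Longrightarrow> le x top" unfolding le_def using join_top .
lemma le_bot: "x \<in> K \<Longrightarrow> le x bot \<Longrightarrow> x = bot" using bot_le le_antisym bot_closed by blast

lemma compl_antimono:
  assumes k: "x \<in> K" "y \<in> K" "le x y"
  shows "le (n y) (n x)"
proof -
  have "p (n (p x (n y))) (n (p x y)) = n x"
    using huntington[of "n x" y] k compl_compl compl_closed by simp
  then have e: "p (n (p x (n y))) (n y) = n x" using k unfolding le_def by simp
  show ?thesis unfolding le_def
    using e[symmetric] join_assoc join_idem join_comm k compl_closed join_closed by metis
qed

lemma compl_le_compl_iff: "x \<in> K \<Longrightarrow> y \<in> K \<Longrightarrow> le (n y) (n x) \<longleftrightarrow> le x y"
  using compl_antimono compl_compl compl_closed by metis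

lemma meet_closed: "x \<in> K \<Longrightarrow> y \<in> K \<Longrightarrow> meet x y \<in> K"
  unfolding meet_def using join_closed compl_closed by simp
lemma meet_comm: "x \<in> K \<Longrightarrow> y \<in> K \<Longrightarrow> meet x y = meet y x"
  unfolding meet_def using join_comm compl_closed by metis
lemma meet_le1: "x \<in> K \<Longrightarrow> y \<in> K \<Longrightarrow> le (meet x y) x"
  unfolding meet_def
  using compl_antimono[of "n x" "p (n x) (n y)"] le_join1 compl_compl compl_closed join_closed
  by metis
lemma meet_le2: "x \<in> K \<Longrightarrow> y \<in> K \<Longrightarrow> le (meet x y) y"
  using meet_le1 meet_comm by metis

lemma meet_glb:
  assumes k: "x \<in> K" "y \<in> K" "z \<in> K" "le z x" "le z y"
  shows "le z (meet x y)"
proof -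
  have "le (p (n x) (n y)) (n z)" using join_lub compl_antimono k compl_closed by simp
  then have "le (n (n z)) (n (p (n x) (n y)))"
    using compl_antimono k compl_closed join_closed by simp
  then show ?thesis unfolding meet_def using compl_compl k by simp
qed

lemma meet_mono: "x \<in> K \<Longrightarrow> y \<in> K \<Longrightarrow> z \<in> K \<Longrightarrow> le x y \<Longrightarrow> le (meet x z) (meet y z)"
  using meet_glb meet_le1 meet_le2 le_trans meet_closed by metis

lemma meet_compl: "x \<in> K \<Longrightarrow> meet x (n x) = bot"
  unfolding meet_def bot_def using compl_compl compl_join_top compl_closed by simp

lemma meet_eq_bot_iff: "x \<in> K \<Longrightarrow> y \<in> K \<Longrightarrow> meet x y = bot \<longleftrightarrow> le y (n x)"
proof
  assume k: "x \<in> K" "y \<in> K" "meet x y = bot"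
  have "p (n (p (n y) (n x))) (n (p (n y) x)) = y" using huntington k by simp
  then have "p bot (n (p (n y) x)) = y" using k meet_comm unfolding meet_def by metis
  then have e: "n (p (n y) x) = y"
    using join_bot join_comm bot_closed k compl_closed join_closed by metis
  have "le x (p (n y) x)" using le_join2 k compl_closed by simp
  then have "le (n (p (n y) x)) (n x)" using compl_antimono k compl_closed join_closed by simp
  then show "le y (n x)" using e by simp
next
  assume k: "x \<in> K" "y \<in> K" "le y (n x)"
  have "le (meet x y) (meet x (n x))"
    using meet_glb meet_le1 meet_le2 le_trans k meet_closed compl_closed by metis
  then show "meet x y = bot" using meet_compl le_bot k meet_closed by simp
qed

lemma meet_split: "x \<in> K \<Longrightarrow> y \<in> K \<Longrightarrow> p (meet x y) (meet x (n y)) = x"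
  using huntington[of x y] compl_compl[of y] unfolding meet_def by simp

lemma meet_top: "x \<in> K \<Longrightarrow> meet x top = x"
  unfolding meet_def using join_bot compl_compl compl_closed unfolding bot_def by simp
lemma meet_idem: "x \<in> K \<Longrightarrow> meet x x = x"
  unfolding meet_def using join_idem compl_compl compl_closed by simp
lemma le_iff_meet: "x \<in> K \<Longrightarrow> y \<in> K \<Longrightarrow> le x y \<longleftrightarrow> meet x y = x"
  using meet_glb meet_le1 meet_le2 le_refl le_antisym meet_closed by metis

end

locale wa =
  fixes A :: "'a ra_sig"
  assumes WA: "WA A"
begin

abbreviation "K \<equiv> wcar A"
abbreviation "pl \<equiv> wplus A"
abbreviation "ng \<equiv> wcompl A"
abbreviation "cp \<equiv> wcomp A"
abbreviation "cv \<equiv> wconv A"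
abbreviation "ii \<equiv> wid A"

sublocale B: huntington K pl ng ii
  using WA unfolding WA_def by unfold_locales blast+

lemma id_closed: "ii \<in> K" using WA unfolding WA_def by blast
lemma comp_closed: "x \<in> K \<Longrightarrow> y \<in> K \<Longrightarrow> cp x y \<in> K" using WA unfolding WA_def by blast
lemma conv_closed: "x \<in> K \<Longrightarrow> cv x \<in> K" using WA unfolding WA_def by blast
lemma weak_assoc: "x \<in> K \<Longrightarrow> cp (cp (wmeet A x ii) (wone A)) (wone A) = cp (wmeet A x ii) (wone A)"
  using WA id_closed unfolding WA_def by blast
lemma comp_distrib_right: "x \<in> K \<Longrightarrow> y \<in> K \<Longrightarrow> z \<in> K \<Longrightarrow>
  cp (pl x y) z = pl (cp x z) (cp y z)" using WA unfolding WA_def by blast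
lemma comp_id_right: "x \<in> K \<Longrightarrow> cp x ii = x" using WA id_closed unfolding WA_def by blast
lemma conv_conv: "x \<in> K \<Longrightarrow> cv (cv x) = x" using WA id_closed unfolding WA_def by blast
lemma conv_plus: "x \<in> K \<Longrightarrow> y \<in> K \<Longrightarrow> cv (pl x y) = pl (cv x) (cv y)" using WA unfolding WA_def by blast
lemma conv_comp: "x \<in> K \<Longrightarrow> y \<in> K \<Longrightarrow> cv (cp x y) = cp (cv y) (cv x)" using WA unfolding WA_def by blast
lemma conv_comp_compl: "x \<in> K \<Longrightarrow> y \<in> K \<Longrightarrow>
  pl (cp (cv x) (ng (cp x y))) (ng y) = ng y" using WA id_closed unfolding WA_def by blast

lemma top_eq_wone: "B.top = wone A" unfolding B.top_def wone_def wdiv_def by simp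
lemma bot_eq_wzero: "B.bot = wzero A" unfolding B.bot_def wzero_def top_eq_wone by simp
lemma le_eq_wle: "B.le = wle A" unfolding B.le_def[abs_def] wle_def[abs_def] by simp
lemma meet_eq_wmeet: "B.meet = wmeet A" unfolding B.meet_def[abs_def] wmeet_def[abs_def] by simp

abbreviation "le \<equiv> B.le"
abbreviation "mt \<equiv> B.meet"
abbreviation "tp \<equiv> B.top"
abbreviation "bt \<equiv> B.bot"

lemmas wa_closed = id_closed B.join_closed comp_closed B.compl_closed conv_closed B.top_closed B.bot_closed B.meet_closed

lemma comp_mono_left: "x \<in> K \<Longrightarrow> y \<in> K \<Longrightarrow> z \<in> K \<Longrightarrow> le x y \<Longrightarrow> le (cp x z) (cp y z)"
  unfolding B.le_def using comp_distrib_right by metis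

lemma comp_distrib_left:
  assumes k: "x \<in> K" "y \<in> K" "z \<in> K"
  shows "cp x (pl y z) = pl (cp x y) (cp x z)"
proof -
  have "cv (cp x (pl y z)) = cv (pl (cp x y) (cp x z))"
    using k by (simp add: conv_comp conv_plus comp_distrib_right conv_closed comp_closed B.join_closed)
  then have "cv (cv (cp x (pl y z))) = cv (cv (pl (cp x y) (cp x z)))" by simp
  then show ?thesis using k by (simp add: conv_conv comp_closed B.join_closed)
qed

lemma comp_mono_right: "x \<in> K \<Longrightarrow> y \<in> K \<Longrightarrow> z \<in> K \<Longrightarrow> le x y \<Longrightarrow> le (cp z x) (cp z y)"
  unfolding B.le_def using comp_distrib_left by metis

lemma comp_mono: "x \<in> K \<Longrightarrow> y \<in> K \<Longrightarrow> z \<in> K \<Longrightarrow> w \<in> K \<Longrightarrow> le x y \<Longrightarrow> le z w \<Longrightarrow> le (cp x z) (cp y w)"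
  using comp_mono_left comp_mono_right B.le_trans comp_closed by metis

lemma conv_mono: "x \<in> K \<Longrightarrow> y \<in> K \<Longrightarrow> le x y \<Longrightarrow> le (cv x) (cv y)"
  unfolding B.le_def using conv_plus by metis

lemma conv_le_conv_iff: "x \<in> K \<Longrightarrow> y \<in> K \<Longrightarrow> le (cv x) (cv y) \<longleftrightarrow> le x y"
  using conv_mono conv_conv conv_closed by metis

lemma conv_inj: "x \<in> K \<Longrightarrow> y \<in> K \<Longrightarrow> cv x = cv y \<Longrightarrow> x = y"
  using conv_conv by metis

lemma conv_id: "cv ii = ii"
proof -
  have "cv (cp (cv ii) ii) = cp (cv ii) (cv (cv ii))" using conv_comp id_closed conv_closed by simp
  then have "cv (cv ii) = cp (cv ii) ii" using comp_id_right conv_conv id_closed conv_closed by simp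
  then have "ii = cv ii" using conv_conv comp_id_right id_closed conv_closed by simp
  then show ?thesis by simp
qed

lemma comp_id_left:
  assumes k: "x \<in> K"
  shows "cp ii x = x"
proof -
  have "cv (cp ii x) = cv x"
    using conv_comp[of ii x] k id_closed conv_id comp_id_right conv_closed by simp
  then show ?thesis using conv_inj k comp_closed id_closed by blast
qed

lemma conv_top: "cv tp = tp"
proof -
  have "le (cv tp) tp" using B.le_top conv_closed wa_closed by simp
  moreover have "le tp (cv tp)"
  proof -
    have "le (cv tp) tp" using B.le_top conv_closed wa_closed by simp
    then have "le (cv (cv tp)) (cv tp)" using conv_mono conv_closed wa_closed by simp
    then show ?thesis using conv_conv wa_closed by simp
  qed
  ultimately show ?thesis using B.le_antisym conv_closed wa_closed by simp
qed

lemma conv_bot: "cv bt = bt"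
proof -
  have "le bt (cv bt)" using B.bot_le conv_closed wa_closed by simp
  then have "le (cv bt) (cv (cv bt))" using conv_mono conv_closed wa_closed by simp
  then have "le (cv bt) bt" using conv_conv wa_closed by simp
  then show ?thesis using B.le_bot conv_closed wa_closed by simp
qed

lemma conv_eq_bot_iff: "x \<in> K \<Longrightarrow> cv x = bt \<longleftrightarrow> x = bt"
  using conv_bot conv_conv by metis

lemma peirce:
  assumes k: "x \<in> K" "y \<in> K" "z \<in> K" "mt (cp x y) z = bt"
  shows "mt (cp (cv x) z) y = bt"
proof -
  from k have "le z (ng (cp x y))" using B.meet_eq_bot_iff comp_closed by simp
  then have "le (cp (cv x) z) (cp (cv x) (ng (cp x y)))"
    using comp_mono_right k conv_closed B.compl_closed comp_closed by simp
  moreover have "le (cp (cv x) (ng (cp x y))) (ng y)"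
    using conv_comp_compl k unfolding B.le_def by simp
  ultimately have "le (cp (cv x) z) (ng y)" using B.le_trans k wa_closed by metis
  then have "mt y (cp (cv x) z) = bt" using B.meet_eq_bot_iff k wa_closed by simp
  then show ?thesis using B.meet_comm k wa_closed by metis
qed

lemma peirce_iff: "x \<in> K \<Longrightarrow> y \<in> K \<Longrightarrow> z \<in> K \<Longrightarrow> mt (cp x y) z = bt \<longleftrightarrow> mt (cp (cv x) z) y = bt"
  using peirce[of x y z] peirce[of "cv x" z y] conv_conv conv_closed by auto

lemma meet_ne_bot_if_le: "x \<in> K \<Longrightarrow> y \<in> K \<Longrightarrow> le x y \<Longrightarrow> x \<noteq> bt \<Longrightarrow> mt x y \<noteq> bt"
  using B.le_iff_meet by metis

lemma atom_closed: "a \<in> At A \<Longrightarrow> a \<in> K" unfolding At_def by blast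
lemma atom_ne_bot: "a \<in> At A \<Longrightarrow> a \<noteq> bt" unfolding At_def bot_eq_wzero by blast
lemma atom_minimal: "a \<in> At A \<Longrightarrow> y \<in> K \<Longrightarrow> le y a \<Longrightarrow> y = bt \<or> y = a"
  unfolding At_def bot_eq_wzero le_eq_wle by blast

lemma atom_le_if_meet:
  assumes a: "a \<in> At A" "x \<in> K" "mt a x \<noteq> bt"
  shows "le a x"
proof -
  have "le (mt a x) a" using B.meet_le1 a atom_closed by simp
  then have "mt a x = a" using atom_minimal[of a "mt a x"] a atom_closed wa_closed by auto
  then show ?thesis using B.le_iff_meet a atom_closed by simp
qed

lemma atom_le_atom_eq: "a \<in> At A \<Longrightarrow> b \<in> At A \<Longrightarrow> le a b \<Longrightarrow> a = b"
  using atom_minimal atom_ne_bot atom_closed by blast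

lemma atom_eq_if_meet: "a \<in> At A \<Longrightarrow> b \<in> At A \<Longrightarrow> mt a b \<noteq> bt \<Longrightarrow> a = b"
  using atom_le_if_meet atom_le_atom_eq atom_closed by blast

lemma le_meet_atom_ne_bot: "a \<in> At A \<Longrightarrow> x \<in> K \<Longrightarrow> le a x \<Longrightarrow> mt x a \<noteq> bt"
  using meet_ne_bot_if_le B.meet_comm atom_closed atom_ne_bot by metis

lemma conv_atom:
  assumes a: "a \<in> At A"
  shows "cv a \<in> At A"
proof -
  have "cv a \<in> K" using a atom_closed conv_closed by simp
  moreover have "cv a \<noteq> bt" using a atom_ne_bot conv_eq_bot_iff atom_closed by simp
  moreover have "\<forall>y \<in> K. le y (cv a) \<longrightarrow> y = bt \<or> y = cv a"
  proof (intro ballI impI)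
    fix y assume y: "y \<in> K" "le y (cv a)"
    then have "le (cv y) a"
      using conv_le_conv_iff[of "cv y" a] conv_conv a atom_closed conv_closed by simp
    then have "cv y = bt \<or> cv y = a" using atom_minimal a conv_closed y by simp
    then show "y = bt \<or> y = cv a" using conv_eq_bot_iff y conv_conv by metis
  qed
  ultimately show ?thesis unfolding At_def bot_eq_wzero le_eq_wle by blast
qed

lemma subid_comp_le_meet:
  assumes k: "e \<in> K" "f \<in> K" "le e ii" "le f ii"
  shows "le (cp f e) (mt f e)"
proof -
  have a: "le (cp f e) (cp f ii)" using comp_mono_right k wa_closed by simp
  have b: "le (cp f e) (cp ii e)" using comp_mono_left k wa_closed by simp
  show ?thesis using B.meet_glb[OF _ _ _ a b] comp_id_right comp_id_left k wa_closed by simp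
qed

lemma conv_subid_le:
  assumes d: "d \<in> K" "le d ii"
  shows "le (cv d) d"
proof -
  define e where "e = mt (ng d) ii"
  define g where "g = mt (ng d) (ng ii)"
  have eK: "e \<in> K" and gK: "g \<in> K" unfolding e_def g_def using d wa_closed by auto
  have spl: "ng d = pl e g" unfolding e_def g_def
    using B.meet_split[of "ng d" ii] d wa_closed by simp
  have ei: "le e ii" unfolding e_def using B.meet_le2 d wa_closed by simp
  have "le (cp d e) (mt d e)" using subid_comp_le_meet[OF eK d(1) ei d(2)] .
  moreover have "le (mt d e) (mt d (ng d))"
  proof -
    have "le (mt d e) (ng d)" unfolding e_def
      using B.le_trans[OF _ _ _ B.meet_le2 B.meet_le1] d wa_closed by simp
    then show ?thesis using B.meet_glb B.meet_le1 d eK wa_closed by simp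
  qed
  ultimately have "le (cp d e) bt" using B.meet_compl B.le_trans d eK wa_closed by metis
  then have de: "cp d e = bt" using B.le_bot d eK wa_closed by simp
  have "le (cp d g) (cp ii (ng ii))"
    using comp_mono[OF d(1) id_closed gK _ d(2)] B.meet_le2 d wa_closed unfolding g_def by simp
  then have dg: "le (cp d g) (ng ii)" using comp_id_left wa_closed by simp
  have "cp d (ng d) = pl (cp d e) (cp d g)" using spl comp_distrib_left d eK gK by simp
  also have "\<dots> = cp d g" using de B.join_bot B.join_comm d gK wa_closed by metis
  finally have "le (cp d (ng d)) (ng ii)" using dg by simp
  then have "mt (cp d (ng d)) ii = bt" using B.meet_eq_bot_iff B.meet_comm d wa_closed by metis
  then have "mt (cv d) (ng d) = bt"
    using peirce[of d "ng d" ii] comp_id_right conv_closed d wa_closed by simp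
  then have "le (ng d) (ng (cv d))" using B.meet_eq_bot_iff d wa_closed by simp
  then show ?thesis using B.compl_le_compl_iff d wa_closed by simp
qed

lemma conv_subid:
  assumes d: "d \<in> K" "le d ii"
  shows "cv d = d"
proof -
  have "le (cv d) ii" using conv_mono[of d ii] d conv_id wa_closed by simp
  then have "le d (cv d)" using conv_subid_le[of "cv d"] conv_conv d wa_closed by simp
  then show ?thesis using conv_subid_le[OF d] B.le_antisym d wa_closed by simp
qed

text \<open>The only use of the weak associativity axiom.\<close>
lemma subid_comp_top_top:
  assumes k: "f \<in> K" "le f ii"
  shows "cp (cp f tp) tp = cp f tp"
proof -
  have "mt f ii = f" using B.le_iff_meet k wa_closed by simp
  then show ?thesis using weak_assoc[of f] k unfolding meet_eq_wmeet top_eq_wone by simp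
qed

lemma disjoint_subid_domains:
  assumes k: "e \<in> K" "f \<in> K" "le e ii" "le f ii" "mt e f = bt"
  shows "mt (cp e tp) (cp f tp) = bt"
proof -
  have a: "cp f e = bt" using subid_comp_le_meet[of e f] k B.meet_comm B.le_bot wa_closed by metis
  have "mt (cp (cv f) e) tp = bt" using a conv_subid k B.meet_top wa_closed by simp
  then have b: "mt (cp f tp) e = bt" using peirce_iff[of f tp e] k wa_closed by simp
  have c: "mt (cp (cp f tp) tp) e = bt" using b subid_comp_top_top k by simp
  have "mt (cp (cv (cp tp f)) tp) e = bt" using c conv_comp conv_top conv_subid k wa_closed by simp
  then have "mt (cp (cp tp f) e) tp = bt" using peirce_iff[of "cp tp f" e tp] k wa_closed by simp
  then have d: "cp (cp tp f) e = bt" using B.meet_top k wa_closed by simp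
  have "cv (cp (cp tp f) e) = cp e (cp f tp)"
    using conv_comp conv_subid conv_top k wa_closed by simp
  then have e: "cp e (cp f tp) = bt" using d conv_bot by simp
  have "mt (cp (cv e) (cp f tp)) tp = bt" using e conv_subid k B.meet_top wa_closed by simp
  then show ?thesis using peirce_iff[of e tp "cp f tp"] k wa_closed by simp
qed

end

locale atomic_wa = wa +
  assumes atomic: "atomic A"
begin

lemma atom_below: "x \<in> K \<Longrightarrow> x \<noteq> bt \<Longrightarrow> \<exists>a \<in> At A. le a x"
  using atomic unfolding atomic_def bot_eq_wzero le_eq_wle by blast

lemma domain_atom_ex:
  assumes x: "x \<in> At A"
  shows "\<exists>e \<in> At A. le e ii \<and> le x (cp e x)"
proof -
  have xK: "x \<in> K" using x atom_closed by simp
  have nz: "mt (cp x (cv x)) ii \<noteq> bt"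
  proof
    assume "mt (cp x (cv x)) ii = bt"
    then have "mt (cp (cv x) ii) (cv x) = bt" using peirce xK wa_closed by simp
    then have "cv x = bt" using comp_id_right B.meet_idem xK wa_closed by simp
    then show False using x atom_ne_bot conv_eq_bot_iff xK by simp
  qed
  have mK: "mt (cp x (cv x)) ii \<in> K" using xK wa_closed by simp
  obtain e where e: "e \<in> At A" "le e (mt (cp x (cv x)) ii)" using atom_below[OF mK nz] by blast
  have eK: "e \<in> K" using e atom_closed by simp
  have ei: "le e ii" using B.le_trans[OF eK mK id_closed e(2) B.meet_le2] xK wa_closed by simp
  have ex: "le e (cp x (cv x))" using B.le_trans[OF eK mK _ e(2) B.meet_le1] xK wa_closed by simp
  have "mt (cp x (cv x)) e \<noteq> bt" using le_meet_atom_ne_bot[OF e(1) _ ex] xK wa_closed by simp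
  then have "mt (cp (cv x) e) (cv x) \<noteq> bt" using peirce_iff[of x "cv x" e] xK eK wa_closed by simp
  then have "mt (cv x) (cp (cv x) e) \<noteq> bt"
    using B.meet_comm[of "cp (cv x) e" "cv x"] xK eK wa_closed by simp
  then have "le (cv x) (cp (cv x) e)" using atom_le_if_meet conv_atom x xK eK wa_closed by simp
  then have "le (cv (cv x)) (cv (cp (cv x) e))" using conv_mono xK eK wa_closed by simp
  then have "le x (cp e x)" using conv_conv conv_comp conv_subid[OF eK ei] xK eK wa_closed by simp
  then show ?thesis using e ei by blast
qed

lemma domain_atom_unique: "x \<in> At A \<Longrightarrow> e1 \<in> At A \<Longrightarrow> e2 \<in> At A \<Longrightarrow> le e1 ii \<Longrightarrow> le e2 ii \<Longrightarrow>
   le x (cp e1 tp) \<Longrightarrow> le x (cp e2 tp) \<Longrightarrow> e1 = e2"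
proof (rule ccontr)
  assume k: "x \<in> At A" "e1 \<in> At A" "e2 \<in> At A" "le e1 ii" "le e2 ii"
     "le x (cp e1 tp)" "le x (cp e2 tp)" "e1 \<noteq> e2"
  have K': "x \<in> K" "e1 \<in> K" "e2 \<in> K" using k atom_closed by auto
  have "mt e1 e2 = bt" using atom_eq_if_meet k by blast
  then have "mt (cp e1 tp) (cp e2 tp) = bt" using disjoint_subid_domains k K' by simp
  moreover have "le x (mt (cp e1 tp) (cp e2 tp))" using B.meet_glb k K' wa_closed by simp
  ultimately have "x = bt" using B.le_bot K' by simp
  then show False using k atom_ne_bot by simp
qed

definition dom :: "'a \<Rightarrow> 'a" where
  "dom x = (THE e. e \<in> At A \<and> le e ii \<and> le x (cp e x))"

lemma le_comp_top:
  assumes k: "x \<in> K" "e \<in> K" "le x (cp e x)"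
  shows "le x (cp e tp)"
proof -
  have "le (cp e x) (cp e tp)" using comp_mono_right[OF k(1) B.top_closed k(2) B.le_top[OF k(1)]] .
  then show ?thesis using B.le_trans[OF k(1) _ _ k(3)] k wa_closed by simp
qed

lemma dom_atom:
  assumes x: "x \<in> At A"
  shows "dom x \<in> At A \<and> le (dom x) ii \<and> le x (cp (dom x) x)"
proof -
  obtain e where e: "e \<in> At A" "le e ii" "le x (cp e x)" using domain_atom_ex x by blast
  have uniq: "\<And>e'. e' \<in> At A \<and> le e' ii \<and> le x (cp e' x) \<Longrightarrow> e' = e"
  proof -
    fix e' assume h: "e' \<in> At A \<and> le e' ii \<and> le x (cp e' x)"
    have "le x (cp e' tp)" using le_comp_top h atom_closed x by blast
    moreover have "le x (cp e tp)" using le_comp_top e atom_closed x by blast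
    ultimately show "e' = e" using domain_atom_unique[OF x] h e by blast
  qed
  have "dom x = e" unfolding dom_def
  proof (rule the_equality)
    show "e \<in> At A \<and> le e ii \<and> le x (cp e x)" using e by blast
    show "\<And>e'. e' \<in> At A \<and> le e' ii \<and> le x (cp e' x) \<Longrightarrow> e' = e" by (rule uniq)
  qed
  then show ?thesis using e by simp
qed

lemma dom_eqI:
  assumes k: "x \<in> At A" "e \<in> At A" "le e ii" "le x (cp e tp)"
  shows "dom x = e"
proof -
  have d: "dom x \<in> At A" "le (dom x) ii" "le x (cp (dom x) x)" using dom_atom k by auto
  have "le x (cp (dom x) tp)" using le_comp_top d atom_closed k by blast
  then show ?thesis using domain_atom_unique[OF k(1) d(1) k(2) d(2) k(3)] k by blast
qed

lemma dom_comp_eq: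
  assumes k: "x \<in> At A" "y \<in> At A" "w \<in> K" "le x (cp y w)"
  shows "dom x = dom y"
proof -
  have xK: "x \<in> K" using k(1) by (rule atom_closed)
  have yK: "y \<in> K" using k(2) by (rule atom_closed)
  define d where "d = dom y"
  have dp: "d \<in> At A \<and> le d ii \<and> le y (cp d y)" unfolding d_def by (rule dom_atom[OF k(2)])
  have dK: "d \<in> K" using dp atom_closed by blast
  have dyK: "cp d y \<in> K" using dK yK by (rule comp_closed)
  have dtK: "cp d tp \<in> K" using dK B.top_closed by (rule comp_closed)
  have s1: "le (cp y w) (cp (cp d y) w)" using comp_mono_left[OF yK dyK k(3)] dp by blast
  have s2: "le (cp d y) (cp d tp)" using comp_mono_right[OF yK B.top_closed dK B.le_top[OF yK]] .
  have s3: "le (cp (cp d y) w) (cp (cp d tp) tp)"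
    using comp_mono[OF dyK dtK k(3) B.top_closed s2 B.le_top[OF k(3)]] .
  have s4: "cp (cp d tp) tp = cp d tp" using subid_comp_top_top dK dp by blast
  have ywK: "cp y w \<in> K" using yK k(3) by (rule comp_closed)
  have dywK: "cp (cp d y) w \<in> K" using dyK k(3) by (rule comp_closed)
  have "le x (cp (cp d y) w)" using B.le_trans[OF xK ywK dywK k(4) s1] .
  then have "le x (cp (cp d tp) tp)"
    using B.le_trans[OF xK dywK _ _ s3] dtK B.top_closed comp_closed by blast
  then have "le x (cp d tp)" using s4 by simp
  then show ?thesis using dom_eqI[OF k(1)] dp unfolding d_def by blast
qed

lemma dom_subid:
  assumes e: "e \<in> At A" "le e ii"
  shows "dom e = e"
proof -
  have eK: "e \<in> K" using e(1) by (rule atom_closed)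
  have "le (cp e ii) (cp e tp)"
    using comp_mono_right[OF id_closed B.top_closed eK B.le_top[OF id_closed]] .
  then have "le e (cp e tp)" using comp_id_right[OF eK] by simp
  then show ?thesis using dom_eqI[OF e(1) e(1) e(2)] by blast
qed

end

context wa begin

lemma SB_D: "t \<in> SB A \<Longrightarrow>
  tr t 0 \<in> At A \<and> tr t 1 \<in> At A \<and> tr t 2 \<in> At A \<and> le (tr t 1) (cp (tr t 2) (tr t 0))"
  unfolding SB_def le_eq_wle by blast

lemma SB_atom: "t \<in> SB A \<Longrightarrow> k < 3 \<Longrightarrow> tr t k \<in> At A"
  using SB_D less_3_cases by blast

lemma SB_closed: "t \<in> SB A \<Longrightarrow> k < 3 \<Longrightarrow> tr t k \<in> K"
  using SB_atom atom_closed by blast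

lemma SB_subid_2:
  assumes t: "t \<in> SB A" "le (tr t 2) ii"
  shows "tr t 0 = tr t 1"
proof -
  have a: "tr t 0 \<in> At A" "tr t 1 \<in> At A" "tr t 2 \<in> At A" "le (tr t 1) (cp (tr t 2) (tr t 0))"
    using SB_D[OF t(1)] by auto
  have K': "tr t 0 \<in> K" "tr t 1 \<in> K" "tr t 2 \<in> K" using a atom_closed by auto
  have "le (cp (tr t 2) (tr t 0)) (cp ii (tr t 0))"
    using comp_mono_left[OF K'(3) id_closed K'(1) t(2)] .
  then have "le (cp (tr t 2) (tr t 0)) (tr t 0)" using comp_id_left[OF K'(1)] by simp
  then have "le (tr t 1) (tr t 0)" using B.le_trans[OF K'(2) _ K'(1) a(4)] comp_closed K' by blast
  then show ?thesis using atom_le_atom_eq a by metis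
qed

lemma SB_subid_0:
  assumes t: "t \<in> SB A" "le (tr t 0) ii"
  shows "tr t 1 = tr t 2"
proof -
  have a: "tr t 0 \<in> At A" "tr t 1 \<in> At A" "tr t 2 \<in> At A" "le (tr t 1) (cp (tr t 2) (tr t 0))"
    using SB_D[OF t(1)] by auto
  have K': "tr t 0 \<in> K" "tr t 1 \<in> K" "tr t 2 \<in> K" using a atom_closed by auto
  have "le (cp (tr t 2) (tr t 0)) (cp (tr t 2) ii)"
    using comp_mono_right[OF K'(1) id_closed K'(3) t(2)] .
  then have "le (cp (tr t 2) (tr t 0)) (tr t 2)" using comp_id_right[OF K'(3)] by simp
  then have "le (tr t 1) (tr t 2)" using B.le_trans[OF K'(2) _ K'(3) a(4)] comp_closed K' by blast
  then show ?thesis using atom_le_atom_eq a by metis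
qed

lemma SB_cycle:
  assumes t: "t \<in> SB A"
  shows "mt (cp (cv (tr t 2)) (tr t 1)) (tr t 0) \<noteq> bt"
proof -
  have a: "tr t 0 \<in> At A" "tr t 1 \<in> At A" "tr t 2 \<in> At A" "le (tr t 1) (cp (tr t 2) (tr t 0))"
    using SB_D[OF t] by auto
  have K': "tr t 0 \<in> K" "tr t 1 \<in> K" "tr t 2 \<in> K" using a atom_closed by auto
  have "mt (cp (tr t 2) (tr t 0)) (tr t 1) \<noteq> bt"
    using le_meet_atom_ne_bot[OF a(2) _ a(4)] comp_closed K' by blast
  then show ?thesis using peirce_iff[OF K'(3) K'(1) K'(2)] by simp
qed

lemma SB_subid_1:
  assumes t: "t \<in> SB A" "le (tr t 1) ii"
  shows "tr t 2 = cv (tr t 0)"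
proof -
  have a: "tr t 0 \<in> At A" "tr t 1 \<in> At A" "tr t 2 \<in> At A"
    using SB_D[OF t(1)] by auto
  have K': "tr t 0 \<in> K" "tr t 1 \<in> K" "tr t 2 \<in> K" using a atom_closed by auto
  have c2K: "cv (tr t 2) \<in> K" using conv_closed K' by blast
  have "le (cp (cv (tr t 2)) (tr t 1)) (cp (cv (tr t 2)) ii)"
    using comp_mono_right[OF K'(2) id_closed c2K t(2)] .
  then have l: "le (cp (cv (tr t 2)) (tr t 1)) (cv (tr t 2))" using comp_id_right[OF c2K] by simp
  have "le (mt (cp (cv (tr t 2)) (tr t 1)) (tr t 0)) (mt (cv (tr t 2)) (tr t 0))"
    using B.meet_mono[OF _ c2K K'(1) l] comp_closed c2K K' by blast
  then have "mt (cv (tr t 2)) (tr t 0) \<noteq> bt"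
    using SB_cycle[OF t(1)] B.le_bot B.meet_closed comp_closed c2K K' by metis
  then have "cv (tr t 2) = tr t 0" using atom_eq_if_meet conv_atom a by blast
  then show ?thesis using conv_conv K' by metis
qed

lemma SE_refl: "SE A k k = SB A" unfolding SE_def by simp
lemma SE_sym: "SE A k l = SE A l k" unfolding SE_def by (simp add: add.commute diff_diff_left)
lemma SE_iff: "k \<noteq> l \<Longrightarrow> t \<in> SE A k l \<longleftrightarrow> t \<in> SB A \<and> le (tr t (3-k-l)) ii"
  unfolding SE_def le_eq_wle by simp
lemma SE_SB: "t \<in> SE A k l \<Longrightarrow> t \<in> SB A" unfolding SE_def by (auto split: if_splits)

lemma SB_subid_third:
  assumes h: "t \<in> SB A" "a < 3" "b < 3" "a \<noteq> b" "le (tr t a) ii" "le (tr t b) ii" "c < 3"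
  shows "le (tr t c) ii"
proof -
  have "le (tr t 0) ii \<and> le (tr t 1) ii \<and> le (tr t 2) ii"
  proof -
    have cases: "(a = 0 \<or> a = 1 \<or> a = 2) \<and> (b = 0 \<or> b = 1 \<or> b = 2)" using h by auto
    show ?thesis using cases h SB_subid_2[OF h(1)] SB_subid_0[OF h(1)] by auto
  qed
  then show ?thesis using h(7) less_3_cases by blast
qed

lemma SE_trans:
  assumes h: "t \<in> SE A i j" "t \<in> SE A j k" "i < 3" "j < 3" "k < 3"
  shows "t \<in> SE A i k"
proof -
  have tS: "t \<in> SB A" using h SE_SB by blast
  show ?thesis
  proof (cases "i = j \<or> j = k \<or> i = k")
    case True then show ?thesis using h tS SE_refl by auto
  next
    case False
    then have d: "i \<noteq> j" "j \<noteq> k" "i \<noteq> k" by auto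
    have a: "le (tr t (3-i-j)) ii" "le (tr t (3-j-k)) ii" using h SE_iff d by auto
    have "3-i-j \<noteq> 3-j-k" "3-i-j < 3" "3-j-k < 3" "3-i-k < 3" using d h by auto
    then have "le (tr t (3-i-k)) ii" using SB_subid_third[OF tS _ _ _ a] by blast
    then show ?thesis using SE_iff d tS by auto
  qed
qed

end

context atomic_wa begin

lemma SB_dom_1_2:
  assumes t: "t \<in> SB A"
  shows "dom (tr t 1) = dom (tr t 2)"
proof -
  have a: "tr t 0 \<in> At A" "tr t 1 \<in> At A" "tr t 2 \<in> At A" "le (tr t 1) (cp (tr t 2) (tr t 0))"
    using SB_D[OF t] by auto
  show ?thesis using dom_comp_eq[OF a(2) a(3) _ a(4)] a(1) atom_closed by blast
qed

lemma SB_dom_0_conv_2: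
  assumes t: "t \<in> SB A"
  shows "dom (tr t 0) = dom (cv (tr t 2))"
proof -
  have a: "tr t 0 \<in> At A" "tr t 1 \<in> At A" "tr t 2 \<in> At A"
    using SB_D[OF t] by auto
  have K': "tr t 0 \<in> K" "tr t 1 \<in> K" "tr t 2 \<in> K" using a atom_closed by auto
  have "mt (tr t 0) (cp (cv (tr t 2)) (tr t 1)) \<noteq> bt"
    using SB_cycle[OF t] B.meet_comm comp_closed conv_closed K' by metis
  then have "le (tr t 0) (cp (cv (tr t 2)) (tr t 1))"
    using atom_le_if_meet a comp_closed conv_closed K' by blast
  then show ?thesis using dom_comp_eq a conv_atom K' by blast
qed

lemma SB_dom_conv_1_conv_0:
  assumes t: "t \<in> SB A"
  shows "dom (cv (tr t 1)) = dom (cv (tr t 0))"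
proof -
  have a: "tr t 0 \<in> At A" "tr t 1 \<in> At A" "tr t 2 \<in> At A" "le (tr t 1) (cp (tr t 2) (tr t 0))"
    using SB_D[OF t] by auto
  have K': "tr t 0 \<in> K" "tr t 1 \<in> K" "tr t 2 \<in> K" using a atom_closed by auto
  have "le (cv (tr t 1)) (cv (cp (tr t 2) (tr t 0)))" using conv_mono a(4) comp_closed K' by blast
  then have "le (cv (tr t 1)) (cp (cv (tr t 0)) (cv (tr t 2)))" using conv_comp K' by simp
  then show ?thesis using dom_comp_eq conv_atom a conv_closed K' by blast
qed

text \<open>A triangle \<open>t \<in> SB A\<close> is read as three points \<open>0, 1, 2\<close> with the atom \<open>tr t 2\<close> on the edge
  from \<open>0\<close> to \<open>1\<close>, \<open>tr t 0\<close> on \<open>1 \<rightarrow> 2\<close> and \<open>tr t 1\<close> on \<open>0 \<rightarrow> 2\<close>; reversed edges carry converses and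
  each point the identity atom below the edges leaving it (\<open>vertex_id_alt\<close>).\<close>
definition vertex_id :: "'a tri \<Rightarrow> nat \<Rightarrow> 'a" where
  "vertex_id t i = (if i = 0 then dom (tr t 2) else if i = 1 then dom (tr t 0) else dom (cv (tr t 0)))"

definition edge_atom :: "'a tri \<Rightarrow> nat \<Rightarrow> nat \<Rightarrow> 'a" where
  "edge_atom t i j = (if i = j then vertex_id t i else if i < j then tr t (3-i-j) else cv (tr t (3-i-j)))"

lemma vertex_id_alt: "t \<in> SB A \<Longrightarrow>
  vertex_id t 0 = dom (tr t 1) \<and> vertex_id t 1 = dom (cv (tr t 2)) \<and> vertex_id t 2 = dom (cv (tr t 1))"
  unfolding vertex_id_def using SB_dom_1_2 SB_dom_0_conv_2 SB_dom_conv_1_conv_0 by simp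

lemma edge_atom_ST:
  assumes h: "s \<in> SB A" "t \<in> SB A" "l < 3" "tr s l = tr t l" "i < 3" "j < 3" "i \<noteq> l" "j \<noteq> l"
  shows "edge_atom s i j = edge_atom t i j"
proof (cases "i = j")
  case False
  then have "3 - i - j = l" using h by auto
  then show ?thesis unfolding edge_atom_def using h False by simp
next
  case True
  have "vertex_id s i = vertex_id t i"
    using vertex_id_alt[OF h(1)] vertex_id_alt[OF h(2)] h less_3_cases[of i] less_3_cases[of l]
    unfolding vertex_id_def by auto
  then show ?thesis unfolding edge_atom_def using True by simp
qed

lemma edge_atom_merge_01:
  assumes t: "t \<in> SB A" and e: "le (tr t 2) ii" and j: "j < 3"
  shows "edge_atom t 0 j = edge_atom t 1 j \<and> edge_atom t j 0 = edge_atom t j 1"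
proof -
  have "tr t 0 = tr t 1" using SB_subid_2 t e by blast
  moreover have "cv (tr t 2) = tr t 2" using conv_subid SB_closed t e by simp
  moreover have "vertex_id t 0 = tr t 2" "vertex_id t 1 = tr t 2"
    using dom_subid SB_atom t e vertex_id_alt \<open>cv (tr t 2) = tr t 2\<close> unfolding vertex_id_def by simp_all
  ultimately show ?thesis using j by (auto dest!: less_3_cases simp: edge_atom_def)
qed

lemma edge_atom_merge_02:
  assumes t: "t \<in> SB A" and e: "le (tr t 1) ii" and j: "j < 3"
  shows "edge_atom t 0 j = edge_atom t 2 j \<and> edge_atom t j 0 = edge_atom t j 2"
proof -
  have "tr t 2 = cv (tr t 0)" using SB_subid_1 t e by blast
  moreover have "cv (cv (tr t 0)) = tr t 0" using conv_conv SB_closed t by simp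
  moreover have "cv (tr t 1) = tr t 1" using conv_subid SB_closed t e by simp
  moreover have "vertex_id t 0 = tr t 1" "vertex_id t 2 = tr t 1"
    using dom_subid SB_atom t e vertex_id_alt \<open>cv (tr t 1) = tr t 1\<close> by simp_all
  ultimately show ?thesis using j by (auto dest!: less_3_cases simp: edge_atom_def)
qed

lemma edge_atom_merge_12:
  assumes t: "t \<in> SB A" and e: "le (tr t 0) ii" and j: "j < 3"
  shows "edge_atom t 1 j = edge_atom t 2 j \<and> edge_atom t j 1 = edge_atom t j 2"
proof -
  have "tr t 1 = tr t 2" using SB_subid_0 t e by blast
  moreover have "cv (tr t 0) = tr t 0" using conv_subid SB_closed t e by simp
  moreover have "vertex_id t 1 = tr t 0" "vertex_id t 2 = tr t 0"
    using dom_subid SB_atom t e \<open>cv (tr t 0) = tr t 0\<close> unfolding vertex_id_def by simp_all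
  ultimately show ?thesis using j by (auto dest!: less_3_cases simp: edge_atom_def)
qed

lemma edge_atom_SE:
  assumes t: "t \<in> SB A" and i: "i < 3" "i' < 3" and j: "j < 3" and "t \<in> SE A i i'"
  shows "edge_atom t i j = edge_atom t i' j \<and> edge_atom t j i = edge_atom t j i'"
proof (cases "i = i'")
  case False
  then have "le (tr t (3 - i - i')) ii" using SE_iff assms by blast
  with i False show ?thesis
    using edge_atom_merge_01[OF t _ j] edge_atom_merge_02[OF t _ j] edge_atom_merge_12[OF t _ j]
    by (auto dest!: less_3_cases)
qed simp

lemma edge_atom_eq_tr:
  assumes h: "s \<in> SB A" "t \<in> SB A" "i < 3" "j < 3" "i \<noteq> j" "edge_atom s i j = edge_atom t i j"
  shows "tr s (3-i-j) = tr t (3-i-j)"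
proof -
  have k: "3-i-j < 3" using h by auto
  show ?thesis
  proof (cases "i < j")
    case True then show ?thesis using h unfolding edge_atom_def by simp
  next
    case False
    then have "cv (tr s (3-i-j)) = cv (tr t (3-i-j))" using h unfolding edge_atom_def by simp
    then show ?thesis using conv_inj SB_closed h k by blast
  qed
qed

end

lemma ST_D: "(a, t) \<in> ST A l \<Longrightarrow> a \<in> SB A \<and> t \<in> SB A \<and> tr a l = tr t l"
  unfolding ST_def by simp

lemma is_trail_Nil [simp]: "\<not> is_trail A []"
  by (simp add: is_trail_def)

lemma is_trail_single [simp]: "is_trail A [x] \<longleftrightarrow> fst x \<in> SB A \<and> snd x < 3"
  by (simp add: is_trail_def)

lemma is_trail_Cons_Cons [simp]:
  "is_trail A (x # y # r) \<longleftrightarrow> fst x \<in> SB A \<and> snd x < 3 \<and> fst x \<noteq> fst y \<and>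
     (fst x, fst y) \<in> ST A (snd x) \<and> is_trail A (y # r)"
  unfolding is_trail_def
  by (simp add: All_less_Suc2) metis

lemma is_trail_append: "is_trail A (xs @ y # ys) \<longleftrightarrow> is_trail A (xs @ [y]) \<and> is_trail A (y # ys)"
proof (induction xs)
  case Nil
  then show ?case by (cases ys) auto
next
  case (Cons a xs)
  then show ?case by (cases xs) auto
qed

lemma is_trail_snoc_relabel:
  "k < 3 \<Longrightarrow> k' < 3 \<Longrightarrow> is_trail A (xs @ [(t, k)]) \<longleftrightarrow> is_trail A (xs @ [(t, k')])"
  by (induction xs rule: induct_list012) auto

lemma is_trail_relab: "is_trail A p \<Longrightarrow> l < 3 \<Longrightarrow> is_trail A (relab p l)"
proof (cases p rule: rev_cases)
  case (snoc ys x)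
  moreover assume "is_trail A p" "l < 3"
  moreover from calculation have "snd x < 3" using is_trail_append[of A ys x "[]"] by simp
  ultimately show ?thesis
    using is_trail_snoc_relabel[of l "snd x" A ys "fst x"] by (simp add: relab_def)
qed simp

lemma trail_step_is_trail: "trail_step A p q \<Longrightarrow> is_trail A p \<and> is_trail A q"
  by (induction rule: trail_step.induct) auto

lemma trail_eq_is_trail: "trail_eq A p q \<Longrightarrow> is_trail A p \<and> is_trail A q"
  by (induction rule: trail_eq.induct) (auto dest: trail_step_is_trail)

definition label_class :: "'a ra_sig \<Rightarrow> 'a tri \<Rightarrow> nat \<Rightarrow> nat set" where
  "label_class A t k = {j. j < 3 \<and> t \<in> SE A k j}"

text \<open>The normal form of a trail: \<open>walk\<close> follows the trail keeping a stack of the steps taken,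
  where a step is cancelled by an immediate step back with the same label (generator (a));
  \<open>climb\<close> then replaces the last label by its \<open>E\<close>-class and, while this class contains a label
  other than that of the topmost stacked step, retreats along that step (generators (b), (c)).\<close>
fun push :: "('t \<times> nat) list \<Rightarrow> 't \<Rightarrow> nat \<Rightarrow> 't \<Rightarrow> ('t \<times> nat) list" where
  "push [] t k t' = [(t, k)]"
| "push ((a, l) # st) t k t' = (if a = t' \<and> l = k then st else (t, k) # (a, l) # st)"

fun walk :: "('t \<times> nat) list \<Rightarrow> ('t \<times> nat) list \<Rightarrow> ('t \<times> nat) list \<times> 't \<times> nat" where
  "walk st [] = (st, undefined, 0)"
| "walk st [x] = (st, fst x, snd x)"
| "walk st (x # y # r) = walk (push st (fst x) (snd x) (fst y)) (y # r)"

fun climb :: "'a ra_sig \<Rightarrow> ('a tri \<times> nat) list \<Rightarrow> 'a tri \<Rightarrow> nat set \<Rightarrow>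
    ('a tri \<times> nat) list \<times> 'a tri \<times> nat set" where
  "climb A [] t I = ([], t, I)"
| "climb A ((a, l) # st) t I =
    (if \<exists>v \<in> I. v \<noteq> l then climb A st a (label_class A a (SOME v. v \<in> I \<and> v \<noteq> l))
     else ((a, l) # st, t, I))"

definition trail_nf :: "'a ra_sig \<Rightarrow> 'a trail \<Rightarrow> ('a tri \<times> nat) list \<times> 'a tri \<times> nat set" where
  "trail_nf A q = (case walk [] q of (st, t, k) \<Rightarrow> climb A st t (label_class A t k))"

fun reduced :: "('t \<times> nat) list \<Rightarrow> 't \<Rightarrow> bool" where
  "reduced [] c = True"
| "reduced [x] c = True"
| "reduced ((a, l) # (b, l') # st) c = (\<not> (b = c \<and> l' = l) \<and> reduced ((b, l') # st) a)"

fun stack_path :: "'a ra_sig \<Rightarrow> ('a tri \<times> nat) list \<Rightarrow> 'a tri \<Rightarrow> bool" where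
  "stack_path A [] c \<longleftrightarrow> c \<in> SB A"
| "stack_path A ((a, l) # st) c \<longleftrightarrow> (a, c) \<in> ST A l \<and> l < 3 \<and> stack_path A st a"

lemma stack_path_SB: "stack_path A st t \<Longrightarrow> t \<in> SB A"
  by (cases st) (auto dest: ST_D)

lemma label_class_less: "j \<in> label_class A t k \<Longrightarrow> j < 3" unfolding label_class_def by simp
lemma label_class_iff: "j \<in> label_class A t k \<longleftrightarrow> j < 3 \<and> t \<in> SE A k j" unfolding label_class_def by simp

lemma push_push: "reduced st t \<Longrightarrow> push (push st t l s) s l t = st"
  by (cases "(st, t)" rule: reduced.cases) auto

lemma reduced_push: "reduced st t \<Longrightarrow> reduced (push st t k t') t'"
  by (cases "(st, t)" rule: reduced.cases) auto

lemma stack_path_push: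
  "stack_path A st t \<Longrightarrow> (t, t') \<in> ST A k \<Longrightarrow> k < 3 \<Longrightarrow> stack_path A (push st t k t') t'"
  by (cases "(st, t)" rule: reduced.cases) (auto simp: ST_def)

lemma walk_invariant:
  "is_trail A (x # r) \<Longrightarrow> reduced st (fst x) \<Longrightarrow> stack_path A st (fst x) \<Longrightarrow>
   walk st (x # r) = (S, t, k) \<Longrightarrow>
   reduced S t \<and> stack_path A S t \<and> t = fst (last (x # r)) \<and> k = snd (last (x # r))"
proof (induction r arbitrary: x st)
  case (Cons y r)
  let ?st = "push st (fst x) (snd x) (fst y)"
  have "reduced ?st (fst y)" using reduced_push Cons.prems(2) .
  moreover have "stack_path A ?st (fst y)"
    using stack_path_push[OF Cons.prems(3)] Cons.prems(1) by simp
  moreover have "walk ?st (y # r) = (S, t, k)" using Cons.prems(4) by simp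
  ultimately have "reduced S t \<and> stack_path A S t \<and> t = fst (last (y # r)) \<and> k = snd (last (y # r))"
    using Cons.IH[of y ?st] Cons.prems(1) by auto
  then show ?case by (metis last_ConsR list.distinct(1))
qed auto

lemma walk_backtrack: "reduced st (fst (hd (xs @ [(t, l)]))) \<Longrightarrow>
  walk st (xs @ [(t, l), (s, l), (t, k)] @ ys) = walk st (xs @ [(t, k)] @ ys)"
proof (induction xs arbitrary: st)
  case (Cons x xs)
  then show ?case by (cases xs) (auto simp: reduced_push)
qed (simp add: push_push)

lemma walk_snoc: "walk st (xs @ [(t, k)]) = (fst (walk st (xs @ [(t, k')])), t, k)"
  by (induction xs arbitrary: st rule: induct_list012) auto

lemma walk_snoc_snoc: "walk st (xs @ [(t, l), (s, v)]) = (push (fst (walk st (xs @ [(t, l)]))) t l s, s, v)"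
  by (induction xs arbitrary: st rule: induct_list012) auto

context wa begin

declare climb.simps(2)[simp del]

lemma label_class_refl: "t \<in> SB A \<Longrightarrow> k < 3 \<Longrightarrow>
  k \<in> label_class A t k" unfolding label_class_def using SE_refl by simp
lemma label_class_eq:
  assumes h: "t \<in> SB A" "k < 3" "j \<in> label_class A t k"
  shows "label_class A t j = label_class A t k"
proof -
  have j: "j < 3" "t \<in> SE A k j" using h(3) by (auto simp: label_class_iff)
  have jk: "t \<in> SE A j k" using j(2) SE_sym by blast
  show ?thesis
  proof (rule set_eqI)
    fix x
    show "x \<in> label_class A t j \<longleftrightarrow> x \<in> label_class A t k"
      unfolding label_class_iff
        using SE_trans[OF jk _ j(1) h(2)] SE_trans[OF j(2) _ h(2) j(1)] by blast
  qed
qed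

lemma label_class_ST:
  assumes h: "s \<in> SB A" "t \<in> SB A" "tr s l = tr t l" "l < 3" "v < 3" "v \<noteq> l" "w \<noteq> l"
    "w \<in> label_class A s v"
  shows "w \<in> label_class A t v"
proof -
  have w: "w < 3" "s \<in> SE A v w" using h(8) by (auto simp: label_class_iff)
  show ?thesis
  proof (cases "v = w")
    case True then show ?thesis using label_class_refl h by simp
  next
    case False
    then have "3 - v - w = l" using h w by auto
    then show ?thesis using w False h SE_iff unfolding label_class_iff by auto
  qed
qed

lemma climb_Cons_move:
  assumes h: "stack_path A ((a,l)#st) t" "i < 3" "v \<in> label_class A t i" "v \<noteq> l"
  shows "climb A ((a,l)#st) t (label_class A t i) = climb A st a (label_class A a v)"
proof -
  have at: "(a,t) \<in> ST A l" "l < 3" "stack_path A st a" using h(1) by auto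
  have S: "a \<in> SB A" "t \<in> SB A" "tr a l = tr t l" using ST_D[OF at(1)] by auto
  have ex: "\<exists>w \<in> label_class A t i. w \<noteq> l" using h by blast
  define w where "w = (SOME w. w \<in> label_class A t i \<and> w \<noteq> l)"
  have w: "w \<in> label_class A t i" "w \<noteq> l" unfolding w_def
    using someI_ex[of "\<lambda>w. w \<in> label_class A t i \<and> w \<noteq> l"] ex by auto
  have v3: "v < 3" using h(3) label_class_less by blast
  have w3: "w < 3" using w(1) label_class_less by blast
  have e1: "label_class A t w = label_class A t i" using label_class_eq[OF S(2) h(2) w(1)] .
  have e2: "label_class A t v = label_class A t i" using label_class_eq[OF S(2) h(2) h(3)] .
  have "w \<in> label_class A t v" using w(1) e2 by simp
  then have "w \<in> label_class A a v"
    using label_class_ST[OF S(2) S(1) S(3)[symmetric] at(2) v3 h(4) w(2)] by simp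
  then have "label_class A a w = label_class A a v" using label_class_eq[OF S(1) v3] by simp
  then show ?thesis using ex unfolding w_def by (simp add: climb.simps(2))
qed

lemma climb_Cons_stop: "\<not>(\<exists>v \<in> I. v \<noteq> l) \<Longrightarrow> climb A ((a,l)#st) t I = ((a,l)#st, t, I)"
  by (simp add: climb.simps(2))

lemma climb_length: "length (fst (climb A' st t I)) \<le> length st"
  by (induction A' st t I rule: climb.induct) (auto simp: climb.simps(2) le_SucI)

lemma climb_Cons_move_shorter:
  assumes "stack_path A ((a, l) # st) t" "i < 3" "v \<in> label_class A t i" "v \<noteq> l"
  shows "length (fst (climb A ((a, l) # st) t (label_class A t i))) < length ((a, l) # st)"
  using climb_Cons_move[OF assms] climb_length[of A st a] by (simp add: le_imp_less_Suc)

lemma climb_push: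
  assumes st: "stack_path A S t" "(t, s) \<in> ST A l" and "l < 3" "v < 3" "v \<noteq> l"
  shows "climb A (push S t l s) s (label_class A s v) = climb A S t (label_class A t v)"
proof -
  have "t \<in> SB A" "s \<in> SB A" using ST_D[OF st(2)] by blast+
  then have v: "v \<in> label_class A t v" "v \<in> label_class A s v"
    using label_class_refl \<open>v < 3\<close> by blast+
  show ?thesis
  proof (cases "\<exists>S'. S = (s, l) # S'")
    case True
    then obtain S' where S: "S = (s, l) # S'" by blast
    then have "climb A S t (label_class A t v) = climb A S' s (label_class A s v)"
      using climb_Cons_move[of s l S' t v v] st(1) v(1) \<open>v < 3\<close> \<open>v \<noteq> l\<close> by simp
    then show ?thesis using S by simp
  next
    case False
    have "push S t l s = (t, l) # S"
    proof (cases S)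
      case (Cons x S')
      with False show ?thesis by (cases x) auto
    qed simp
    moreover have "stack_path A ((t, l) # S) s" using st \<open>l < 3\<close> by simp
    ultimately show ?thesis using climb_Cons_move[of t l S s v v] v(2) \<open>v < 3\<close> \<open>v \<noteq> l\<close> by simp
  qed
qed

lemma climb_inj:
  "stack_path A st t \<Longrightarrow> i < 3 \<Longrightarrow> j < 3 \<Longrightarrow>
   climb A st t (label_class A t i) = climb A st t (label_class A t j) \<Longrightarrow>
   label_class A t i = label_class A t j"
proof (induction st arbitrary: t i j)
  case (Cons x st)
  obtain a l where x: "x = (a, l)" by fastforce
  have path: "stack_path A ((a, l) # st) t" using Cons.prems(1) x by simp
  then have at: "(a, t) \<in> ST A l" "l < 3" "stack_path A st a" by auto
  then have S: "a \<in> SB A" "t \<in> SB A" "tr a l = tr t l" using ST_D[OF at(1)] by auto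
  have eq: "climb A ((a, l) # st) t (label_class A t i) = climb A ((a, l) # st) t (label_class A t j)"
    using Cons.prems(4) x by simp
  show ?case
  proof (cases "\<exists>v \<in> label_class A t i. v \<noteq> l")
    case True
    then obtain v where v: "v \<in> label_class A t i" "v \<noteq> l" by blast
    have "\<exists>w \<in> label_class A t j. w \<noteq> l"
    proof (rule ccontr)
      assume "\<not> ?thesis"
      then show False
        using climb_Cons_move_shorter[OF path Cons.prems(2) v] eq climb_Cons_stop by simp
    qed
    then obtain w where w: "w \<in> label_class A t j" "w \<noteq> l" by blast
    have v3: "v < 3" and w3: "w < 3" using label_class_less[OF v(1)] label_class_less[OF w(1)] by auto
    have "climb A st a (label_class A a v) = climb A st a (label_class A a w)"
      using climb_Cons_move[OF path Cons.prems(2) v] climb_Cons_move[OF path Cons.prems(3) w] eq by simp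
    then have "w \<in> label_class A a v"
      using Cons.IH[OF at(3) v3 w3] label_class_refl[OF S(1) w3] by simp
    then have "w \<in> label_class A t v"
      using label_class_ST[OF S(1) S(2) S(3) at(2) v3 v(2) w(2)] by simp
    then show ?thesis
      using label_class_eq[OF S(2) v3] label_class_eq[OF S(2) Cons.prems(2) v(1)]
        label_class_eq[OF S(2) Cons.prems(3) w(1)] by simp
  next
    case False
    have "\<not> (\<exists>w \<in> label_class A t j. w \<noteq> l)"
    proof
      assume "\<exists>w \<in> label_class A t j. w \<noteq> l"
      then obtain w where "w \<in> label_class A t j" "w \<noteq> l" by blast
      from climb_Cons_move_shorter[OF path Cons.prems(3) this] show False
        using eq[symmetric] climb_Cons_stop[OF False] by simp
    qed
    then show ?thesis using False eq climb_Cons_stop by simp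
  qed
qed simp

lemma walk_stack:
  assumes "is_trail A p"
  shows "reduced (fst (walk [] p)) (fst (last p)) \<and> stack_path A (fst (walk [] p)) (fst (last p))"
proof (cases p)
  case (Cons x r)
  obtain S t k where g: "walk [] p = (S, t, k)" by (metis prod_cases3)
  have "fst x \<in> SB A" using assms Cons by (cases r) auto
  have "reduced S t \<and> stack_path A S t \<and> t = fst (last (x # r)) \<and> k = snd (last (x # r))"
    by (rule walk_invariant) (use assms g Cons \<open>fst x \<in> SB A\<close> in simp_all)
  then show ?thesis unfolding g Cons[symmetric] by auto
qed (use assms in simp)

lemma trail_nf_relab:
  assumes p: "is_trail A p"
  shows "trail_nf A (relab p l) = climb A (fst (walk [] p)) (fst (last p)) (label_class A (fst (last p)) l)"
proof -
  have "p = butlast p @ [(fst (last p), snd (last p))]" using p by (cases p rule: rev_cases) auto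
  then have "walk [] (relab p l) = (fst (walk [] p), fst (last p), l)"
    unfolding relab_def
      using walk_snoc[of "[]" "butlast p" "fst (last p)" l "snd (last p)"] by metis
  then show ?thesis unfolding trail_nf_def by simp
qed

lemma trail_step_nf: "trail_step A p q \<Longrightarrow> trail_nf A p = trail_nf A q"
proof (induction rule: trail_step.induct)
  case (ruleA xs t l s k ys)
  then show ?case unfolding trail_nf_def using walk_backtrack[of "[]" xs t l s k ys] by simp
next
  case (ruleB xs t l s v)
  have t1: "is_trail A (xs @ [(t,l)])" and t2: "is_trail A [(t,l),(s,v)]"
    using ruleB(1) is_trail_append[of A xs "(t,l)" "[(s,v)]"] by auto
  have st: "(t,s) \<in> ST A l" "l < 3" "v < 3" using t2 by auto
  define S where "S = fst (walk [] (xs @ [(t,l)]))"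
  have rv: "reduced S t" "stack_path A S t" using walk_stack[OF t1] unfolding S_def by auto
  have g1: "walk [] (xs @ [(t,l),(s,v)]) = (push S t l s, s, v)" unfolding S_def by (rule walk_snoc_snoc)
  have g2: "walk [] (xs @ [(t,v)]) = (S, t, v)" unfolding S_def by (rule walk_snoc)
  have lv: "v \<noteq> l" using ruleB(3) by simp
  show ?case unfolding trail_nf_def g1 g2 using climb_push[OF rv(2) st(1) st(2) st(3) lv] by simp
next
  case (ruleC xs t l k)
  have tp: "is_trail A (xs @ [(t,l)])" using ruleC(1) by simp
  have tk: "is_trail A (xs @ [(t,k)])" using ruleC(2) by simp
  have "is_trail A [(t,l)]" "is_trail A [(t,k)]"
    using is_trail_append[of A xs "(t,l)" "[]"] is_trail_append[of A xs "(t,k)" "[]"] tp tk by auto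
  then have tl: "t \<in> SB A" "l < 3" "k < 3" by auto
  have "k \<in> label_class A t l" using ruleC(3) tl by (simp add: label_class_iff)
  then have e: "label_class A t k = label_class A t l" using label_class_eq tl by blast
  define S where "S = fst (walk [] (xs @ [(t,l)]))"
  have g1: "walk [] (xs @ [(t,l)]) = (S, t, l)" unfolding S_def by (rule walk_snoc)
  have g2: "walk [] (xs @ [(t,k)]) = (S, t, k)" unfolding S_def by (rule walk_snoc)
  show ?case unfolding trail_nf_def g1 g2 using e by simp
qed

lemma trail_eq_nf: "trail_eq A p q \<Longrightarrow> trail_nf A p = trail_nf A q"
  by (induction rule: trail_eq.induct) (auto dest: trail_step_nf)

lemma trail_nf_relab_SE:
  assumes h: "is_trail A p" "k < 3" "l < 3" "trail_nf A (relab p k) = trail_nf A (relab p l)"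
  shows "fst (last p) \<in> SE A k l"
proof -
  have v: "stack_path A (fst (walk [] p)) (fst (last p))" using walk_stack h by blast
  have "label_class A (fst (last p)) k = label_class A (fst (last p)) l"
    using climb_inj[OF v h(2) h(3)] h(4) trail_nf_relab[OF h(1)] by simp
  then have "l \<in> label_class A (fst (last p)) k"
    using label_class_refl stack_path_SB[OF v] h by simp
  then show ?thesis by (simp add: label_class_iff)
qed

end

context atomic_wa begin

lemma edge_atom_climb_step:
  assumes path: "stack_path A ((a, l) # st) t" and "i < 3" "j < 3"
    and v: "v \<in> label_class A t i" "v \<noteq> l" and w: "w \<in> label_class A t j" "w \<noteq> l"
  shows "edge_atom t i j = edge_atom a v w"
proof -
  from path have "(a, t) \<in> ST A l" "l < 3" by auto
  then have S: "a \<in> SB A" "t \<in> SB A" "tr a l = tr t l" "l < 3"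
    using ST_D[of a t A l] by auto
  have "v < 3" "w < 3" using label_class_less[OF v(1)] label_class_less[OF w(1)] by auto
  have "edge_atom t i j = edge_atom t v j"
    using edge_atom_SE[OF S(2) \<open>i < 3\<close> \<open>v < 3\<close> \<open>j < 3\<close>] v label_class_iff by blast
  also have "\<dots> = edge_atom t v w"
    using edge_atom_SE[OF S(2) \<open>j < 3\<close> \<open>w < 3\<close> \<open>v < 3\<close>] w label_class_iff by blast
  also have "\<dots> = edge_atom a v w"
    using edge_atom_ST[OF S(1,2,4,3) \<open>v < 3\<close> \<open>w < 3\<close> v(2) w(2)] by simp
  finally show ?thesis .
qed

lemma climb_common:
  assumes "stack_path A st t" "i < 3" "j < 3"
    and "climb A st t (label_class A t i) = (Sa, ra, Ia)"
    and "climb A st t (label_class A t j) = (Sb, rb, Ib)"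
    and "length Sb \<le> length Sa"
  shows "\<exists>i' j'. i' < 3 \<and> j' < 3 \<and> Ia = label_class A ra i' \<and>
    climb A Sa ra (label_class A ra j') = (Sb, rb, Ib) \<and>
    edge_atom t i j = edge_atom ra i' j' \<and> stack_path A Sa ra"
  using assms
proof (induction st arbitrary: t i j)
  case (Cons x st)
  obtain a l where x: "x = (a, l)" by fastforce
  have path: "stack_path A ((a, l) # st) t" using Cons.prems(1) x by simp
  have pa: "climb A ((a, l) # st) t (label_class A t i) = (Sa, ra, Ia)"
    and pb: "climb A ((a, l) # st) t (label_class A t j) = (Sb, rb, Ib)"
    using Cons.prems(4,5) x by simp_all
  show ?case
  proof (cases "\<exists>v \<in> label_class A t i. v \<noteq> l")
    case True
    then obtain v where v: "v \<in> label_class A t i" "v \<noteq> l" by blast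
    have "\<exists>w \<in> label_class A t j. w \<noteq> l"
    proof (rule ccontr)
      assume "\<not> ?thesis"
      then have "Sb = (a, l) # st" using pb climb_Cons_stop by simp
      then show False
        using climb_Cons_move_shorter[OF path Cons.prems(2) v] pa Cons.prems(6) by simp
    qed
    then obtain w where w: "w \<in> label_class A t j" "w \<noteq> l" by blast
    have "v < 3" "w < 3" using label_class_less[OF v(1)] label_class_less[OF w(1)] by auto
    moreover have "climb A st a (label_class A a v) = (Sa, ra, Ia)"
      "climb A st a (label_class A a w) = (Sb, rb, Ib)"
      using climb_Cons_move[OF path Cons.prems(2) v] climb_Cons_move[OF path Cons.prems(3) w] pa pb
      by simp_all
    moreover have "stack_path A st a" using path by simp
    ultimately show ?thesis
      using Cons.IH Cons.prems(6) edge_atom_climb_step[OF path Cons.prems(2,3) v w] by metis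
  next
    case False
    then show ?thesis using pa pb path Cons.prems(2,3) climb_Cons_stop by auto
  qed
qed auto

lemma climb_edge_atom:
  assumes path: "stack_path A S t" "stack_path A S' t'" and ij: "i < 3" "j < 3"
    and eq_i: "climb A S t (label_class A t i) = climb A S' t' (label_class A t' i)"
    and eq_j: "climb A S t (label_class A t j) = climb A S' t' (label_class A t' j)"
    and len: "length (fst (climb A S t (label_class A t j))) \<le>
      length (fst (climb A S t (label_class A t i)))"
  shows "edge_atom t i j = edge_atom t' i j"
proof -
  obtain Sa ra Ia where a: "climb A S t (label_class A t i) = (Sa, ra, Ia)" by (metis prod_cases3)
  obtain Sb rb Ib where b: "climb A S t (label_class A t j) = (Sb, rb, Ib)" by (metis prod_cases3)
  have "length Sb \<le> length Sa" using len a b by simp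
  obtain i1 j1 where p: "i1 < 3" "j1 < 3" "Ia = label_class A ra i1"
      "climb A Sa ra (label_class A ra j1) = (Sb, rb, Ib)" "edge_atom t i j = edge_atom ra i1 j1"
      "stack_path A Sa ra"
    using climb_common[OF path(1) ij a b \<open>length Sb \<le> length Sa\<close>] by blast
  obtain i2 j2 where q: "i2 < 3" "j2 < 3" "Ia = label_class A ra i2"
      "climb A Sa ra (label_class A ra j2) = (Sb, rb, Ib)" "edge_atom t' i j = edge_atom ra i2 j2"
    using climb_common[OF path(2) ij a[unfolded eq_i] b[unfolded eq_j] \<open>length Sb \<le> length Sa\<close>]
    by blast
  have ra: "ra \<in> SB A" using stack_path_SB p(6) by blast
  have "label_class A ra j1 = label_class A ra j2" using climb_inj[OF p(6) p(2) q(2)] p(4) q(4) by simp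
  then have j: "j2 \<in> label_class A ra j1" using label_class_refl[OF ra q(2)] by simp
  have i: "i2 \<in> label_class A ra i1" using label_class_refl[OF ra q(1)] p(3) q(3) by simp
  have "edge_atom ra i1 j1 = edge_atom ra i2 j1" using edge_atom_SE[OF ra p(1) q(1) p(2)] i label_class_iff by blast
  also have "\<dots> = edge_atom ra i2 j2" using edge_atom_SE[OF ra p(2) q(2) q(1)] j label_class_iff by blast
  finally show ?thesis using p(5) q(5) by simp
qed

lemma trail_nf_relab_tr:
  assumes p: "is_trail A p" and q: "is_trail A q" and ij: "i < 3" "j < 3" "i \<noteq> j"
    and nf: "trail_nf A (relab p i) = trail_nf A (relab q i)" "trail_nf A (relab p j) = trail_nf A (relab q j)"
  shows "tr (fst (last p)) (3 - i - j) = tr (fst (last q)) (3 - i - j)"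
proof -
  define t t' where "t = fst (last p)" and "t' = fst (last q)"
  define S S' where "S = fst (walk [] p)" and "S' = fst (walk [] q)"
  have path: "stack_path A S t" "stack_path A S' t'" unfolding S_def S'_def t_def t'_def using walk_stack p q by blast+
  then have "t \<in> SB A" "t' \<in> SB A" using stack_path_SB by blast+
  have eq_i: "climb A S t (label_class A t i) = climb A S' t' (label_class A t' i)"
    and eq_j: "climb A S t (label_class A t j) = climb A S' t' (label_class A t' j)"
    using nf trail_nf_relab[OF p] trail_nf_relab[OF q] unfolding S_def S'_def t_def t'_def by simp_all
  consider "length (fst (climb A S t (label_class A t j))) \<le> length (fst (climb A S t (label_class A t i)))"
    | "length (fst (climb A S t (label_class A t i))) \<le> length (fst (climb A S t (label_class A t j)))"
    by linarith
  then show ?thesis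
  proof cases
    case 1
    then have "edge_atom t i j = edge_atom t' i j" by (rule climb_edge_atom[OF path ij(1,2) eq_i eq_j])
    with edge_atom_eq_tr[OF \<open>t \<in> SB A\<close> \<open>t' \<in> SB A\<close> ij] show ?thesis
      unfolding t_def t'_def by simp
  next
    case 2
    then have "edge_atom t j i = edge_atom t' j i" by (rule climb_edge_atom[OF path ij(2,1) eq_j eq_i])
    then have "tr t (3 - j - i) = tr t' (3 - j - i)"
      using edge_atom_eq_tr[OF \<open>t \<in> SB A\<close> \<open>t' \<in> SB A\<close> ij(2,1)] ij(3) by simp
    then show ?thesis unfolding t_def t'_def by (simp add: add.commute)
  qed
qed

end

text \<open>\<open>trail_rev p @ r\<close> walks back along \<open>p\<close> from its last triangle and then continues with \<open>r\<close>,
  which has to start at the first triangle of \<open>p\<close>; a backward step keeps the label of the forward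
  step it undoes.\<close>
fun trail_rev :: "('t \<times> nat) list \<Rightarrow> ('t \<times> nat) list" where
  "trail_rev [] = []"
| "trail_rev [x] = []"
| "trail_rev (x#y#r) = trail_rev (y#r) @ [(fst y, snd x)]"

lemma ST_sym: "(a,b) \<in> ST A k \<Longrightarrow> (b,a) \<in> ST A k" unfolding ST_def by auto

lemma is_trail_join:
  assumes h: "is_trail A (xs @ [(a,l)])" "is_trail A ((a,l')#ys)"
  shows "is_trail A (xs @ (a,l')#ys)"
proof -
  have "l < 3" using is_trail_append[of A xs "(a,l)" "[]"] h(1) by simp
  moreover have "l' < 3" using h(2) by (cases ys) auto
  ultimately have "is_trail A (xs @ [(a,l')])" using is_trail_snoc_relabel h(1) by blast
  then show ?thesis using h(2) is_trail_append by blast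
qed

lemma is_trail_backtrack:
  assumes h: "is_trail A (xs @ [(t,l),(s,l),(t,k)] @ ys)"
  shows "is_trail A (xs @ [(t,k)] @ ys)"
proof -
  have h': "is_trail A (xs @ (t,l) # ((s,l) # (t,k) # ys))" using h by simp
  have a: "is_trail A (xs @ [(t,l)])" using is_trail_append[of A xs "(t,l)"] h' by blast
  have b: "is_trail A ((t,l) # (s,l) # (t,k) # ys)"
    using is_trail_append[of A xs "(t,l)"] h' by blast
  then have c: "is_trail A ((t,k) # ys)" by simp
  show ?thesis using is_trail_join[OF a c] by simp
qed

lemma trail_eq_backtrack:
  assumes h: "is_trail A (xs @ [(t,l),(s,l),(t,k)] @ ys)"
  shows "trail_eq A (xs @ [(t,l),(s,l),(t,k)] @ ys) (xs @ [(t,k)] @ ys)"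
proof -
  have h2: "is_trail A (xs @ [(t,k)] @ ys)" using is_trail_backtrack[OF h] .
  have "trail_step A (xs @ [(t,l),(s,l),(t,k)] @ ys) (xs @ [(t,k)] @ ys)"
    by (rule ruleA) (simp_all only: h h2)
  then show ?thesis by (rule te_step)
qed

lemma trail_eq_refl: "is_trail A p \<Longrightarrow> trail_eq A p p" by (rule te_refl) simp

lemma trail_eq_rev_forward: "is_trail A q \<Longrightarrow>
  is_trail A (Z @ trail_rev q @ butlast q @ (fst (last q), k) # Y) \<Longrightarrow>
  trail_eq A (Z @ trail_rev q @ butlast q @ (fst (last q), k) # Y) (Z @ (fst (last q), k) # Y)"
proof (induction q arbitrary: Z rule: trail_rev.induct)
  case 1 then show ?case by simp
next
  case (2 x) then show ?case using trail_eq_refl by simp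
next
  case (3 x y r)
  have "\<exists>k' B. butlast (y#r) @ (fst (last (y#r)), k) # Y = (fst y, k') # B"
  proof (cases r)
    case Nil then show ?thesis by simp
  next
    case (Cons z r')
    then show ?thesis by (intro exI[of _ "snd y"] exI[of _ "butlast r @ (fst (last (y#r)), k) # Y"]) simp
  qed
  then obtain k' B where B: "butlast (y#r) @ (fst (last (y#r)), k) # Y = (fst y, k') # B" by blast
  have e1: "Z @ trail_rev (x#y#r) @ butlast (x#y#r) @ (fst (last (x#y#r)), k) # Y
      = (Z @ trail_rev (y#r)) @ [(fst y, snd x), (fst x, snd x), (fst y, k')] @ B"
    using B by simp
  have e2: "(Z @ trail_rev (y#r)) @ [(fst y, k')] @ B = Z @ trail_rev (y#r) @ butlast (y#r) @ (fst (last (y#r)), k) # Y"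
    using B by simp
  have t1: "is_trail A ((Z @ trail_rev (y#r)) @ [(fst y, snd x), (fst x, snd x), (fst y, k')] @ B)"
    using 3(3) e1 by simp
  have s1: "trail_eq A ((Z @ trail_rev (y#r)) @ [(fst y, snd x), (fst x, snd x), (fst y, k')] @ B)
     ((Z @ trail_rev (y#r)) @ [(fst y, k')] @ B)" using trail_eq_backtrack[OF t1] .
  have t2: "is_trail A (Z @ trail_rev (y#r) @ butlast (y#r) @ (fst (last (y#r)), k) # Y)"
    using is_trail_backtrack[OF t1] e2 by simp
  have ty: "is_trail A (y#r)" using 3(2) by simp
  have s2: "trail_eq A (Z @ trail_rev (y#r) @ butlast (y#r) @ (fst (last (y#r)), k) # Y) (Z @ (fst (last (y#r)), k) # Y)"
    using 3(1)[OF ty t2] .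
  show ?case using te_trans[OF s1[unfolded e2] s2] e1 by simp
qed

lemma trail_rev_snoc: "q \<noteq> [] \<Longrightarrow> trail_rev (q @ [z]) = (fst z, snd (last q)) # trail_rev q"
proof (induction q rule: trail_rev.induct)
  case 1 then show ?case by simp
next
  case (2 x) then show ?case by simp
next
  case (3 x y r) then show ?case by simp
qed

lemma trail_eq_forward_rev: "is_trail A q \<Longrightarrow>
  is_trail A (Z @ butlast q @ trail_rev q @ (fst (hd q), k) # Y) \<Longrightarrow>
  trail_eq A (Z @ butlast q @ trail_rev q @ (fst (hd q), k) # Y) (Z @ (fst (hd q), k) # Y)"
proof (induction q arbitrary: Z rule: rev_induct)
  case Nil then show ?case by simp
next
  case (snoc z q)
  show ?case
  proof (cases "q = []")
    case True then show ?thesis using snoc.prems trail_eq_refl by simp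
  next
    case False
    then obtain q'' w where qw: "q = q'' @ [w]" using rev_exhaust by blast
    have qne: "q \<noteq> []" using False .
    have hd: "fst (hd (q @ [z])) = fst (hd q)" using qne by simp
    have "\<exists>k' B. trail_rev q @ (fst (hd q), k) # Y = (fst w, k') # B"
    proof (cases "q'' = []")
      case True then show ?thesis using qw by simp
    next
      case False then show ?thesis using trail_rev_snoc[OF False, of w] qw by simp
    qed
    then obtain k' B where B: "trail_rev q @ (fst (hd q), k) # Y = (fst w, k') # B" by blast
    have rq: "trail_rev (q @ [z]) = (fst z, snd w) # trail_rev q"
      using trail_rev_snoc[OF qne, of z] qw by simp
    have e1: "Z @ butlast (q @ [z]) @ trail_rev (q @ [z]) @ (fst (hd (q @ [z])), k) # Y
       = (Z @ q'') @ [(fst w, snd w), (fst z, snd w), (fst w, k')] @ B"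
      using B hd rq qw by (simp add: butlast_append)
    have e2: "(Z @ q'') @ [(fst w, k')] @ B = Z @ butlast q @ trail_rev q @ (fst (hd q), k) # Y"
      using qw B by simp
    have t1: "is_trail A ((Z @ q'') @ [(fst w, snd w), (fst z, snd w), (fst w, k')] @ B)"
      using snoc.prems(2) e1 by simp
    have s1: "trail_eq A ((Z @ q'') @ [(fst w, snd w), (fst z, snd w), (fst w, k')] @ B)
       ((Z @ q'') @ [(fst w, k')] @ B)" using trail_eq_backtrack[OF t1] .
    have t2: "is_trail A (Z @ butlast q @ trail_rev q @ (fst (hd q), k) # Y)"
      using is_trail_backtrack[OF t1] e2 by simp
    have tq: "is_trail A q" using snoc.prems(1) qw is_trail_append[of A "q''" w "[z]"] by simp
    have s2: "trail_eq A (Z @ butlast q @ trail_rev q @ (fst (hd q), k) # Y) (Z @ (fst (hd q), k) # Y)"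
      using snoc.IH[OF tq t2] .
    show ?thesis using te_trans[OF s1[unfolded e2] s2] e1 hd by simp
  qed
qed

text \<open>For trails \<open>p, p'\<close> with a common end, \<open>reroute p p'\<close> moves a trail starting where \<open>p\<close> starts
  to one starting where \<open>p'\<close> starts, by prefixing the walk along \<open>p'\<close> and back along \<open>p\<close>, and
  vice versa; other trails are left alone.\<close>
definition detour :: "'a trail \<Rightarrow> 'a trail \<Rightarrow> 'a trail" where "detour p p' = butlast p' @ trail_rev p"

definition reroute :: "'a trail \<Rightarrow> 'a trail \<Rightarrow> 'a trail \<Rightarrow> 'a trail" where
  "reroute p p' r = (if fst (hd r) = fst (hd p) then detour p p' @ r
     else if fst (hd r) = fst (hd p') then detour p' p @ r else r)"

lemma hd_trail_rev_append: "p \<noteq> [] \<Longrightarrow> r \<noteq> [] \<Longrightarrow> fst (hd r) = fst (hd p) \<Longrightarrow>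
  fst (hd (trail_rev p @ r)) = fst (last p)"
proof (induction p arbitrary: r rule: trail_rev.induct)
  case 1 then show ?case by simp
next
  case (2 x) then show ?case by simp
next
  case (3 x y r')
  have "fst (hd (trail_rev (y#r') @ ((fst y, snd x) # r))) = fst (last (y#r'))"
    using 3(1)[of "(fst y, snd x) # r"] by simp
  then show ?case by simp
qed

lemma is_trail_rev_append: "is_trail A p \<Longrightarrow> is_trail A r \<Longrightarrow> fst (hd r) = fst (hd p) \<Longrightarrow>
  is_trail A (trail_rev p @ r)"
proof (induction p arbitrary: r rule: trail_rev.induct)
  case 1 then show ?case by simp
next
  case (2 x) then show ?case by simp
next
  case (3 x y r')
  obtain k r'' where r: "r = (fst x, k) # r''" using 3(3,4) by (cases r) auto
  have xy: "fst x \<in> SB A" "snd x < 3" "fst x \<noteq> fst y" "(fst x, fst y) \<in> ST A (snd x)"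
    using 3(2) by auto
  have xy5: "fst y \<in> SB A" using 3(2) by (cases r') auto
  have "is_trail A ((fst y, snd x) # r)" using r xy xy5 3(3) ST_sym[OF xy(4)] by auto
  then have "is_trail A (trail_rev (y#r') @ ((fst y, snd x) # r))" using 3(1) 3(2) by simp
  then show ?case by simp
qed

lemma is_trail_detour:
  assumes h: "is_trail A p" "is_trail A p'" "fst (last p) = fst (last p')" "is_trail A r"
    "fst (hd r) = fst (hd p)"
  shows "is_trail A (detour p p' @ r) \<and> fst (hd (detour p p' @ r)) = fst (hd p')"
proof -
  have pne: "p \<noteq> []" "p' \<noteq> []" "r \<noteq> []" using h by auto
  have R: "is_trail A (trail_rev p @ r)" using is_trail_rev_append h by blast
  have Rh: "fst (hd (trail_rev p @ r)) = fst (last p')"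
    using hd_trail_rev_append[OF pne(1) pne(3) h(5)] h(3) by simp
  obtain k R' where RR: "trail_rev p @ r = (fst (last p'), k) # R'" using Rh pne(3)
    by (cases "trail_rev p @ r") auto
  have p': "p' = butlast p' @ [(fst (last p'), snd (last p'))]" using pne(2) by simp
  have "is_trail A (butlast p' @ (fst (last p'), k) # R')"
    using is_trail_join[of A "butlast p'" "fst (last p')" "snd (last p')" k R'] h(2) p' R RR by simp
  then have t: "is_trail A (detour p p' @ r)" unfolding detour_def using RR by simp
  have "fst (hd (detour p p' @ r)) = fst (hd p')"
  proof (cases "butlast p' = []")
    case True
    have pl: "p' = [last p']" using append_butlast_last_id[OF pne(2)] True by simp
    have hl: "hd p' = last p'" using pl by (metis list.sel(1))
    have "detour p p' @ r = (fst (last p'), k) # R'" unfolding detour_def using True RR by simp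
    then show ?thesis using hl by simp
  next
    case False
    have "hd (butlast p' @ [last p']) = hd (butlast p')" using False by (rule hd_append2)
    then have "hd (butlast p') = hd p'" using append_butlast_last_id[OF pne(2)] by simp
    then show ?thesis unfolding detour_def using False by (simp add: hd_append)
  qed
  then show ?thesis using t by simp
qed

lemma trail_step_hd: "trail_step A r r' \<Longrightarrow> fst (hd r) = fst (hd r')"
  by (induction rule: trail_step.induct) (auto simp: hd_append)

lemma trail_eq_hd: "trail_eq A r r' \<Longrightarrow> fst (hd r) = fst (hd r')"
  by (induction rule: trail_eq.induct) (auto dest: trail_step_hd)

lemma trail_step_detour:
  assumes h: "is_trail A p" "is_trail A p'" "fst (last p) = fst (last p')" "trail_step A r r'"
    "fst (hd r) = fst (hd p)"
  shows "trail_step A (detour p p' @ r) (detour p p' @ r')"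
proof -
  have tr: "is_trail A r" "is_trail A r'" using trail_step_is_trail h(4) by auto
  have h': "fst (hd r') = fst (hd p)" using trail_step_hd[OF h(4)] h(5) by simp
  have t1: "is_trail A (detour p p' @ r)" using is_trail_detour[OF h(1-3) tr(1) h(5)] by blast
  have t2: "is_trail A (detour p p' @ r')" using is_trail_detour[OF h(1-3) tr(2) h'] by blast
  show ?thesis using h(4) t1 t2
  proof (induction rule: trail_step.cases)
    case (ruleA xs t l s k ys)
    then show ?case using trail_step.ruleA[of A "detour p p' @ xs" t l s k ys] by simp
  next
    case (ruleB xs t l s v)
    then show ?case using trail_step.ruleB[of A "detour p p' @ xs" t l s v] by simp
  next
    case (ruleC xs t l k)
    then show ?case using trail_step.ruleC[of A "detour p p' @ xs" t l k] by simp
  qed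
qed

lemma trail_eq_detour: "is_trail A p \<Longrightarrow> is_trail A p' \<Longrightarrow> fst (last p) = fst (last p') \<Longrightarrow>
  trail_eq A r r' \<Longrightarrow> fst (hd r) = fst (hd p) \<Longrightarrow> trail_eq A (detour p p' @ r) (detour p p' @ r')"
proof -
  assume h: "is_trail A p" "is_trail A p'" "fst (last p) = fst (last p')"
  show "trail_eq A r r' \<Longrightarrow> fst (hd r) = fst (hd p) \<Longrightarrow> trail_eq A (detour p p' @ r) (detour p p' @ r')"
  proof (induction rule: trail_eq.induct)
    case (te_refl q)
    then show ?case using is_trail_detour[OF h, of q] by (metis trail_eq.te_refl)
  next
    case (te_step q q')
    then show ?case using trail_step_detour[OF h te_step(1)] trail_eq.te_step by blast
  next
    case (te_sym q q')
    then show ?case using trail_eq_hd trail_eq.te_sym by metis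
  next
    case (te_trans q q' q'')
    then show ?case using trail_eq_hd trail_eq.te_trans by metis
  qed
qed

lemma trail_eq_reroute:
  assumes h: "is_trail A p" "is_trail A p'" "fst (last p) = fst (last p')" "trail_eq A r r'"
  shows "trail_eq A (reroute p p' r) (reroute p p' r')"
proof -
  have e: "fst (hd r) = fst (hd r')" using trail_eq_hd h(4) .
  show ?thesis
  proof (cases "fst (hd r) = fst (hd p)")
    case True then show ?thesis unfolding reroute_def
      using trail_eq_detour[OF h(1-3) h(4)] e by simp
  next
    case False
    show ?thesis
    proof (cases "fst (hd r) = fst (hd p')")
      case True then show ?thesis unfolding reroute_def
        using trail_eq_detour[OF h(2) h(1) h(3)[symmetric] h(4)] e False by simp
    next
      case False2: False
      then show ?thesis unfolding reroute_def using h(4) e False by simp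
    qed
  qed
qed

lemma is_trail_reroute: "is_trail A p \<Longrightarrow> is_trail A p' \<Longrightarrow> fst (last p) = fst (last p') \<Longrightarrow>
  is_trail A r \<Longrightarrow> is_trail A (reroute p p' r)"
  unfolding reroute_def using is_trail_detour[of A p p' r] is_trail_detour[of A p' p r] by auto

lemma relab_append: "r \<noteq> [] \<Longrightarrow> relab (W @ r) k = W @ relab r k"
  unfolding relab_def by (simp add: butlast_append)

lemma hd_relab: "r \<noteq> [] \<Longrightarrow> fst (hd (relab r k)) = fst (hd r)"
  unfolding relab_def by (cases r rule: rev_cases) (auto simp: hd_append)

lemma reroute_relab: "r \<noteq> [] \<Longrightarrow> reroute p p' (relab r k) = relab (reroute p p' r) k"
  unfolding reroute_def using hd_relab[of r k] by (simp add: relab_append)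

lemma last_reroute: "r \<noteq> [] \<Longrightarrow> fst (last (reroute p p' r)) = fst (last r)"
  unfolding reroute_def by simp

lemma trail_eq_detour_detour:
  assumes h: "is_trail A p" "is_trail A p'" "fst (last p) = fst (last p')" "is_trail A r"
    "fst (hd r) = fst (hd p)"
  shows "trail_eq A (detour p' p @ detour p p' @ r) r"
proof -
  have pne: "p \<noteq> []" "r \<noteq> []" using h by auto
  have detour1: "is_trail A (detour p p' @ r)" "fst (hd (detour p p' @ r)) = fst (hd p')"
    using is_trail_detour[OF h] by auto
  have detour2: "is_trail A (detour p' p @ (detour p p' @ r))"
    using is_trail_detour[OF h(2) h(1) h(3)[symmetric] detour1] by blast
  have Rh: "fst (hd (trail_rev p @ r)) = fst (last p')"
    using hd_trail_rev_append[OF pne h(5)] h(3) by simp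
  obtain k Y where RR: "trail_rev p @ r = (fst (last p'), k) # Y" using Rh pne(2)
    by (cases "trail_rev p @ r") auto
  have e1: "detour p' p @ detour p p' @ r = butlast p @ trail_rev p' @ butlast p' @ (fst (last p'), k) # Y"
    unfolding detour_def using RR by simp
  have s1: "trail_eq A (butlast p @ trail_rev p' @ butlast p' @ (fst (last p'), k) # Y) (butlast p @ (fst (last p'), k) # Y)"
    using trail_eq_rev_forward[OF h(2)] detour2 e1 by simp
  obtain k2 Y2 where rr: "r = (fst (hd p), k2) # Y2" using h(5) pne(2) by (cases r) auto
  have e2: "butlast p @ (fst (last p'), k) # Y = [] @ butlast p @ trail_rev p @ (fst (hd p), k2) # Y2"
    using RR rr by simp
  have t2: "is_trail A ([] @ butlast p @ trail_rev p @ (fst (hd p), k2) # Y2)"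
    using is_trail_backtrack trail_eq_is_trail s1 e2 by metis
  have s2: "trail_eq A ([] @ butlast p @ trail_rev p @ (fst (hd p), k2) # Y2) ([] @ (fst (hd p), k2) # Y2)"
    using trail_eq_forward_rev[OF h(1) t2] .
  show ?thesis using te_trans[OF s1 s2[folded e2]] e1 rr by simp
qed

lemma trail_eq_reroute_reroute:
  assumes h: "is_trail A p" "is_trail A p'" "fst (last p) = fst (last p')" "is_trail A r"
  shows "trail_eq A (reroute p' p (reroute p p' r)) r"
proof -
  show ?thesis
  proof (cases "fst (hd r) = fst (hd p)")
    case True
    have detour1: "fst (hd (detour p p' @ r)) = fst (hd p')"
      using is_trail_detour[OF h True] by auto
    have "reroute p' p (reroute p p' r) = detour p' p @ detour p p' @ r" unfolding reroute_def
      using True detour1 by simp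
    then show ?thesis using trail_eq_detour_detour[OF h True] by simp
  next
    case False
    show ?thesis
    proof (cases "fst (hd r) = fst (hd p')")
      case True
      have detour1: "fst (hd (detour p' p @ r)) = fst (hd p)"
        using is_trail_detour[OF h(2) h(1) h(3)[symmetric] h(4) True] by auto
      have "reroute p' p (reroute p p' r) = detour p p' @ detour p' p @ r" unfolding reroute_def
        using True False detour1 by auto
      then show ?thesis using trail_eq_detour_detour[OF h(2) h(1) h(3)[symmetric] h(4) True] by simp
    next
      case False2: False
      then show ?thesis unfolding reroute_def using False trail_eq_refl h(4) by simp
    qed
  qed
qed

lemma trail_eq_reroute_relab:
  assumes h: "is_trail A p" "is_trail A p'" "fst (last p) = fst (last p')" "k < 3"
  shows "trail_eq A (reroute p p' (relab p k)) (relab p' k)"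
proof -
  have pne: "p \<noteq> []" using h by auto
  have rp: "is_trail A (relab p k)" using is_trail_relab h by blast
  have hh: "fst (hd (relab p k)) = fst (hd p)" using hd_relab pne by blast
  have e: "reroute p p' (relab p k) = butlast p' @ trail_rev p @ butlast p @ [(fst (last p), k)]"
    unfolding reroute_def detour_def relab_def using hh[unfolded relab_def] by simp
  have t: "is_trail A (butlast p' @ trail_rev p @ butlast p @ (fst (last p), k) # [])"
    using is_trail_detour[OF h(1-3) rp hh] e unfolding reroute_def using hh by simp
  have "trail_eq A (butlast p' @ trail_rev p @ butlast p @ (fst (last p), k) # []) (butlast p' @ (fst (last p), k) # [])"
    using trail_eq_rev_forward[OF h(1) t] .
  then show ?thesis using e h(3) unfolding relab_def by simp
qed

lemma U3_iff: "w \<in> U3 A \<longleftrightarrow> (\<forall>l<3. tr w l \<in> UB A)"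
  by (cases w) (simp add: all_less_3 U3_def tr_def)

lemma cls_self: "is_trail A p \<Longrightarrow> p \<in> cls A p"
  unfolding cls_def using te_refl by blast

lemma cls_eq_iff: "is_trail A p \<Longrightarrow> is_trail A q \<Longrightarrow> cls A p = cls A q \<longleftrightarrow> trail_eq A p q"
proof
  assume h: "is_trail A p" "is_trail A q" "cls A p = cls A q"
  then show "trail_eq A p q" using cls_self[OF h(2)] unfolding cls_def by blast
next
  assume h: "is_trail A p" "is_trail A q" "trail_eq A p q"
  show "cls A p = cls A q" unfolding cls_def using h(3) te_sym te_trans by blast
qed

lemma cls_D: "r \<in> cls A q \<Longrightarrow> trail_eq A q r" unfolding cls_def by simp

lemma trail_step_cls: "trail_step A p q \<Longrightarrow> cls A p = cls A q"
  using trail_step_is_trail[of A p q] cls_eq_iff[of A p q] te_step[of A p q] by simp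

definition trail_point :: "'a ra_sig \<Rightarrow> 'a trail \<Rightarrow> 'a trail set tri" where
  "trail_point A p = (cls A (relab p 0), cls A (relab p 1), cls A (relab p 2))"

lemma tr_trail_point: "l < 3 \<Longrightarrow> tr (trail_point A p) l = cls A (relab p l)"
  unfolding trail_point_def by (rule tr_triple)

lemma Rt_iff: "w \<in> Rt A t \<longleftrightarrow> (\<exists>p. is_trail A p \<and> fst (last p) = t \<and> w = trail_point A p)"
  unfolding Rt_def trail_point_def by blast

lemma trail_point_in_Rt: "is_trail A p \<Longrightarrow> trail_point A p \<in> Rt A (fst (last p))"
  unfolding Rt_iff by blast

lemma UB_iff: "c \<in> UB A \<longleftrightarrow> (\<exists>q. is_trail A q \<and> c = cls A q)"
  unfolding UB_def Tr_def by (auto simp: image_iff)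

lemma cls_in_UB: "is_trail A q \<Longrightarrow> cls A q \<in> UB A"
  unfolding UB_iff by blast

lemma Rt_subset_U3: "Rt A t \<subseteq> U3 A"
proof
  fix w assume "w \<in> Rt A t"
  then obtain p where "is_trail A p" "w = trail_point A p" using Rt_iff by blast
  then show "w \<in> U3 A" unfolding U3_iff by (simp add: tr_trail_point is_trail_relab cls_in_UB)
qed

lemma Cgen_subset_U3: "Z \<in> Cgen A \<Longrightarrow> Z \<subseteq> U3 A"
  by (induction rule: Cgen.induct) (auto simp: cylU_def diagU_def dest: Rt_subset_U3[THEN subsetD])

definition UB_perm :: "'a ra_sig \<Rightarrow> ('a trail set \<Rightarrow> 'a trail set) \<Rightarrow> ('a trail set \<Rightarrow> 'a trail set) \<Rightarrow> bool" where
  "UB_perm A \<sigma> \<tau> \<longleftrightarrow> (\<forall>x \<in> UB A. \<sigma> x \<in> UB A \<and> \<tau> x \<in> UB A \<and> \<tau> (\<sigma> x) = x \<and> \<sigma> (\<tau> x) = x)"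

lemma UB_perm_sym: "UB_perm A \<sigma> \<tau> \<Longrightarrow> UB_perm A \<tau> \<sigma>"
  unfolding UB_perm_def by blast

lemma map_tri_U3: "UB_perm A \<sigma> \<tau> \<Longrightarrow> w \<in> U3 A \<Longrightarrow> map_tri \<sigma> w \<in> U3 A"
  unfolding UB_perm_def U3_iff by (simp add: tr_map_tri)

lemma map_tri_inverse: "UB_perm A \<sigma> \<tau> \<Longrightarrow> w \<in> U3 A \<Longrightarrow> map_tri \<tau> (map_tri \<sigma> w) = w"
  unfolding UB_perm_def U3_iff by (intro tr_eqI) (simp_all add: tr_map_tri)

lemma cylU_map_tri:
  assumes perm: "UB_perm A \<sigma> \<tau>" and X: "X \<subseteq> U3 A"
    and inv: "\<forall>w \<in> U3 A. w \<in> X \<longleftrightarrow> map_tri \<sigma> w \<in> X" and w: "w \<in> U3 A"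
  shows "w \<in> cylU A k X \<longleftrightarrow> map_tri \<sigma> w \<in> cylU A k X"
proof
  assume "w \<in> cylU A k X"
  then obtain u where u: "u \<in> X" "\<forall>l<3. l \<noteq> k \<longrightarrow> tr u l = tr w l" unfolding cylU_def by blast
  then have "map_tri \<sigma> u \<in> X" using inv X by blast
  moreover have "\<forall>l<3. l \<noteq> k \<longrightarrow> tr (map_tri \<sigma> u) l = tr (map_tri \<sigma> w) l"
    using u(2) by (simp add: tr_map_tri)
  ultimately show "map_tri \<sigma> w \<in> cylU A k X" unfolding cylU_def using map_tri_U3[OF perm w] by blast
next
  assume "map_tri \<sigma> w \<in> cylU A k X"
  then obtain u' where u': "u' \<in> X" "\<forall>l<3. l \<noteq> k \<longrightarrow> tr u' l = tr (map_tri \<sigma> w) l"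
    unfolding cylU_def by blast
  have perm': "UB_perm A \<tau> \<sigma>" using UB_perm_sym[OF perm] .
  have "map_tri \<tau> u' \<in> U3 A" using map_tri_U3[OF perm'] u'(1) X by blast
  moreover have "map_tri \<sigma> (map_tri \<tau> u') = u'" using map_tri_inverse[OF perm'] u'(1) X by blast
  ultimately have "map_tri \<tau> u' \<in> X" using inv u'(1) by metis
  moreover have "\<forall>l<3. l \<noteq> k \<longrightarrow> tr (map_tri \<tau> u') l = tr w l"
    using u'(2) map_tri_inverse[OF perm w] by (metis tr_map_tri)
  ultimately show "w \<in> cylU A k X" unfolding cylU_def using w by blast
qed

lemma diagU_map_tri:
  assumes perm: "UB_perm A \<sigma> \<tau>" and "k < 3" "l < 3" and w: "w \<in> U3 A"
  shows "w \<in> diagU A k l \<longleftrightarrow> map_tri \<sigma> w \<in> diagU A k l"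
proof -
  have "tr w k \<in> UB A" "tr w l \<in> UB A" using w assms(2,3) unfolding U3_iff by auto
  then have "tr w k = tr w l \<longleftrightarrow> \<sigma> (tr w k) = \<sigma> (tr w l)" using perm unfolding UB_perm_def by metis
  then show ?thesis unfolding diagU_def
    using w map_tri_U3[OF perm w] assms(2,3) by (simp add: tr_map_tri)
qed

lemma Cgen_invariant:
  assumes perm: "UB_perm A \<sigma> \<tau>"
    and Rt: "\<forall>s \<in> SB A. \<forall>w \<in> U3 A. w \<in> Rt A s \<longleftrightarrow> map_tri \<sigma> w \<in> Rt A s"
    and "Z \<in> Cgen A"
  shows "\<forall>w \<in> U3 A. w \<in> Z \<longleftrightarrow> map_tri \<sigma> w \<in> Z"
  using \<open>Z \<in> Cgen A\<close>
proof induction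
  case (compl X)
  then show ?case using map_tri_U3[OF perm] by blast
next
  case (cyl X k)
  then show ?case using cylU_map_tri[OF perm Cgen_subset_U3] by blast
next
  case (diag k l)
  then show ?case using diagU_map_tri[OF perm] by blast
qed (use Rt in blast)+

definition reroute_cls :: "'a ra_sig \<Rightarrow> 'a trail \<Rightarrow> 'a trail \<Rightarrow> 'a trail set \<Rightarrow> 'a trail set" where
  "reroute_cls A p p' c = cls A (reroute p p' (SOME r. r \<in> c))"

lemma reroute_cls_cls:
  assumes p: "is_trail A p" "is_trail A p'" "fst (last p) = fst (last p')" and q: "is_trail A q"
  shows "reroute_cls A p p' (cls A q) = cls A (reroute p p' q)"
proof -
  define r where "r = (SOME r. r \<in> cls A q)"
  have "r \<in> cls A q" unfolding r_def using cls_self[OF q] by (rule someI)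
  then have "trail_eq A q r" by (rule cls_D)
  then have "trail_eq A (reroute p p' q) (reroute p p' r)" using trail_eq_reroute[OF p] by blast
  then show ?thesis
    unfolding reroute_cls_def r_def[symmetric]
    using cls_eq_iff is_trail_reroute[OF p] trail_eq_is_trail by metis
qed

lemma UB_perm_reroute_cls:
  assumes p: "is_trail A p" "is_trail A p'" "fst (last p) = fst (last p')"
  shows "UB_perm A (reroute_cls A p p') (reroute_cls A p' p)"
proof -
  have p': "is_trail A p'" "is_trail A p" "fst (last p') = fst (last p)" using p by auto
  have roundtrip: "reroute_cls A p' p (reroute_cls A p p' (cls A q)) = cls A q"
    if h: "is_trail A p" "is_trail A p'" "fst (last p) = fst (last p')" and q: "is_trail A q"
    for p p' q
  proof -
    have h': "is_trail A p'" "is_trail A p" "fst (last p') = fst (last p)" using h by auto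
    have r: "is_trail A (reroute p p' q)" using is_trail_reroute[OF h q] .
    have "reroute_cls A p' p (reroute_cls A p p' (cls A q)) = cls A (reroute p' p (reroute p p' q))"
      using reroute_cls_cls[OF h q] reroute_cls_cls[OF h' r] by simp
    also have "\<dots> = cls A q"
      using trail_eq_reroute_reroute[OF h q] cls_eq_iff is_trail_reroute[OF h' r] q by blast
    finally show ?thesis .
  qed
  show ?thesis unfolding UB_perm_def
  proof
    fix x assume "x \<in> UB A"
    then obtain q where q: "is_trail A q" "x = cls A q" using UB_iff by blast
    show "reroute_cls A p p' x \<in> UB A \<and> reroute_cls A p' p x \<in> UB A \<and>
      reroute_cls A p' p (reroute_cls A p p' x) = x \<and> reroute_cls A p p' (reroute_cls A p' p x) = x"
      unfolding q(2) reroute_cls_cls[OF p q(1)] reroute_cls_cls[OF p' q(1)]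
      using is_trail_reroute[OF p q(1)] is_trail_reroute[OF p' q(1)] roundtrip[OF p q(1)]
        roundtrip[OF p' q(1)] reroute_cls_cls[OF p q(1)] reroute_cls_cls[OF p' q(1)]
      by (simp add: cls_in_UB)
  qed
qed

lemma reroute_cls_trail_point:
  assumes p: "is_trail A p" "is_trail A p'" "fst (last p) = fst (last p')" and r: "is_trail A r"
  shows "map_tri (reroute_cls A p p') (trail_point A r) = trail_point A (reroute p p' r)"
proof -
  have "r \<noteq> []" using r by auto
  then have "reroute_cls A p p' (cls A (relab r k)) = cls A (relab (reroute p p' r) k)" if "k < 3" for k
    using reroute_cls_cls[OF p is_trail_relab[OF r that]] by (simp add: reroute_relab[OF \<open>r \<noteq> []\<close>])
  then show ?thesis unfolding map_tri_def trail_point_def by simp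
qed

lemma map_tri_reroute_cls_Rt:
  assumes p: "is_trail A p" "is_trail A p'" "fst (last p) = fst (last p')" and w: "w \<in> Rt A s"
  shows "map_tri (reroute_cls A p p') w \<in> Rt A s"
proof -
  obtain r where r: "is_trail A r" "fst (last r) = s" "w = trail_point A r" using w Rt_iff by blast
  then have "r \<noteq> []" by auto
  then have "is_trail A (reroute p p' r)" "fst (last (reroute p p' r)) = s"
    using is_trail_reroute[OF p r(1)] last_reroute r(2) by auto
  moreover have "map_tri (reroute_cls A p p') w = trail_point A (reroute p p' r)"
    using reroute_cls_trail_point[OF p r(1)] r(3) by simp
  ultimately show ?thesis using Rt_iff by blast
qed

lemma Cgen_Rt_homogeneous:
  assumes Z: "Z \<in> Cgen A" and w: "w \<in> Rt A t" "w' \<in> Rt A t" "w \<in> Z"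
  shows "w' \<in> Z"
proof -
  obtain p where p: "is_trail A p" "fst (last p) = t" "w = trail_point A p"
    using w(1) Rt_iff by blast
  obtain p' where p': "is_trail A p'" "fst (last p') = t" "w' = trail_point A p'"
    using w(2) Rt_iff by blast
  have h: "is_trail A p" "is_trail A p'" "fst (last p) = fst (last p')" using p p' by auto
  have h': "is_trail A p'" "is_trail A p" "fst (last p') = fst (last p)" using p p' by auto
  have perm: "UB_perm A (reroute_cls A p p') (reroute_cls A p' p)" by (rule UB_perm_reroute_cls[OF h])
  have "w \<in> Rt A s \<longleftrightarrow> map_tri (reroute_cls A p p') w \<in> Rt A s" if "w \<in> U3 A" for s w
  proof
    assume "map_tri (reroute_cls A p p') w \<in> Rt A s"
    then have "map_tri (reroute_cls A p' p) (map_tri (reroute_cls A p p') w) \<in> Rt A s"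
      by (rule map_tri_reroute_cls_Rt[OF h'])
    then show "w \<in> Rt A s" using map_tri_inverse[OF perm that] by simp
  qed (rule map_tri_reroute_cls_Rt[OF h])
  then have "\<forall>w \<in> U3 A. w \<in> Z \<longleftrightarrow> map_tri (reroute_cls A p p') w \<in> Z"
    using Cgen_invariant[OF perm _ Z] by blast
  moreover have "cls A (relab (reroute p p' p) k) = cls A (relab p' k)" if "k < 3" for k
  proof -
    have "p \<noteq> []" using p by auto
    then have "relab (reroute p p' p) k = reroute p p' (relab p k)" using reroute_relab by metis
    then show ?thesis
      using trail_eq_reroute_relab[OF h that] cls_eq_iff is_trail_reroute[OF h is_trail_relab[OF p(1) that]]
        is_trail_relab[OF p'(1) that] by metis
  qed
  then have "map_tri (reroute_cls A p p') w = w'"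
    using reroute_cls_trail_point[OF h p(1)] unfolding p(3) p'(3) trail_point_def by simp
  ultimately show ?thesis using w Rt_subset_U3 by blast
qed

lemma VB_eq_Rmap: "VB A = Rmap A (SB A)"
  unfolding Rmap_def VB_def ..

lemma Rmap_Un: "Rmap A (X \<union> Y) = Rmap A X \<union> Rmap A Y"
  unfolding Rmap_def by blast

lemma Rmap_in_Cgen: "X \<subseteq> SB A \<Longrightarrow> Rmap A X \<in> Cgen A"
  unfolding Rmap_def by (rule Cgen.union) (auto intro: Cgen.gen)

lemma Cgen_VB_eq_Rmap:
  assumes "Z \<in> Cgen A" "Z \<subseteq> VB A"
  shows "Z = Rmap A {t \<in> SB A. Rt A t \<subseteq> Z}"
proof
  show "Z \<subseteq> Rmap A {t \<in> SB A. Rt A t \<subseteq> Z}"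
  proof
    fix w assume "w \<in> Z"
    moreover obtain t where "t \<in> SB A" "w \<in> Rt A t" using \<open>w \<in> Z\<close> assms(2) unfolding VB_def by blast
    ultimately show "w \<in> Rmap A {t \<in> SB A. Rt A t \<subseteq> Z}"
      using Cgen_Rt_homogeneous[OF assms(1)] unfolding Rmap_def by blast
  qed
qed (auto simp: Rmap_def)

lemma Rt_ST_cylU:
  assumes yx: "(y, x) \<in> ST A k" and k: "k < 3" and w: "w \<in> Rt A y"
  shows "\<exists>u \<in> Rt A x. \<forall>l<3. l \<noteq> k \<longrightarrow> tr u l = tr w l"
proof (cases "x = y")
  case False
  obtain p where p: "is_trail A p" "fst (last p) = y" "w = trail_point A p" using w Rt_iff by blast
  define p' where "p' = butlast p @ [(y, k), (x, 0)]"
  have "is_trail A (butlast p @ [(y, k)])"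
    using is_trail_relab[OF p(1) k] p(2) unfolding relab_def by simp
  moreover have "is_trail A [(y, k), (x, 0)]" using yx k False by (auto simp: ST_def)
  ultimately have p': "is_trail A p'" unfolding p'_def
    using is_trail_join[of A "butlast p" y k k "[(x, 0)]"] by simp
  have "tr (trail_point A p') l = tr w l" if l: "l < 3" "l \<noteq> k" for l
  proof -
    have e: "relab p' l = butlast p @ [(y, k), (x, l)]" "relab p l = butlast p @ [(y, l)]"
      unfolding p'_def relab_def using p(2) by (simp_all add: butlast_append)
    have "trail_step A (butlast p @ [(y, k), (x, l)]) (butlast p @ [(y, l)])"
      by (rule ruleB) (use is_trail_relab[OF p' l(1)] is_trail_relab[OF p(1) l(1)] e l in simp_all)
    then show ?thesis using trail_step_cls e p(3) l(1) by (simp add: tr_trail_point)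
  qed
  moreover have "trail_point A p' \<in> Rt A x" using trail_point_in_Rt[OF p'] by (simp add: p'_def)
  ultimately show ?thesis by blast
qed (use w in blast)

lemma Rt_SE_diag:
  assumes t: "t \<in> SE A k l" and kl: "k < 3" "l < 3" and w: "w \<in> Rt A t"
  shows "tr w k = tr w l"
proof -
  obtain p where p: "is_trail A p" "fst (last p) = t" "w = trail_point A p" using w Rt_iff by blast
  have "cls A (relab p k) = cls A (relab p l)"
  proof (cases "k = l")
    case False
    have "trail_step A (butlast p @ [(t, k)]) (butlast p @ [(t, l)])"
      by (rule ruleC) (use is_trail_relab[OF p(1) kl(1)] is_trail_relab[OF p(1) kl(2)] p(2) t in
        \<open>simp_all add: relab_def\<close>)
    then show ?thesis using trail_step_cls p(2) unfolding relab_def by simp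
  qed simp
  then show ?thesis using p(3) kl by (simp add: tr_trail_point)
qed

context wa begin

lemma cls_nf: "is_trail A p \<Longrightarrow> is_trail A q \<Longrightarrow> cls A p = cls A q \<Longrightarrow> trail_nf A p = trail_nf A q"
  using cls_eq_iff trail_eq_nf by blast

lemma Rt_diag_SE:
  assumes w: "w \<in> Rt A t" and kl: "k < 3" "l < 3" and "tr w k = tr w l"
  shows "t \<in> SE A k l"
proof -
  obtain p where p: "is_trail A p" "fst (last p) = t" "w = trail_point A p" using w Rt_iff by blast
  then have "cls A (relab p k) = cls A (relab p l)"
    using \<open>tr w k = tr w l\<close> kl by (simp add: tr_trail_point)
  then have "trail_nf A (relab p k) = trail_nf A (relab p l)"
    using cls_nf is_trail_relab p(1) kl by blast
  then show ?thesis using trail_nf_relab_SE[OF p(1) kl] p(2) by simp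
qed

end

context atomic_wa begin

lemma Rt_tr_eq:
  assumes w: "w \<in> Rt A s" and u: "u \<in> Rt A t" and ij: "i < 3" "j < 3" "i \<noteq> j"
    and eq: "tr w i = tr u i" "tr w j = tr u j"
  shows "tr s (3 - i - j) = tr t (3 - i - j)"
proof -
  obtain p where p: "is_trail A p" "fst (last p) = s" "w = trail_point A p" using w Rt_iff by blast
  obtain q where q: "is_trail A q" "fst (last q) = t" "u = trail_point A q" using u Rt_iff by blast
  have "trail_nf A (relab p l) = trail_nf A (relab q l)" if "l < 3" "tr w l = tr u l" for l
    using that p q cls_nf[OF is_trail_relab[OF p(1)] is_trail_relab[OF q(1)]] by (simp add: tr_trail_point)
  then show ?thesis using trail_nf_relab_tr[OF p(1) q(1) ij] eq ij p(2) q(2) by simp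
qed

lemma Rt_disjoint: "w \<in> Rt A s \<Longrightarrow> w \<in> Rt A t \<Longrightarrow> s = t"
  using Rt_tr_eq[of w s w t 1 2] Rt_tr_eq[of w s w t 0 2] Rt_tr_eq[of w s w t 0 1] by (simp add: tr_eqI)

lemma cylU_Rt_ST:
  assumes w: "w \<in> Rt A y" and u: "u \<in> Rt A x" and k: "k < 3"
    and eq: "\<forall>l<3. l \<noteq> k \<longrightarrow> tr u l = tr w l"
  shows "tr y k = tr x k"
proof -
  obtain i j where "i < 3" "j < 3" "i \<noteq> j" "i \<noteq> k" "j \<noteq> k" "3 - i - j = k"
    using complementary_pair[OF k] by blast
  then show ?thesis using Rt_tr_eq[OF w u, of i j] eq by simp
qed

lemma Rmap_Int: "Rmap A (X \<inter> Y) = Rmap A X \<inter> Rmap A Y"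
  unfolding Rmap_def using Rt_disjoint by blast

lemma Rmap_Diff: "X \<subseteq> SB A \<Longrightarrow> Rmap A (SB A - X) = VB A - Rmap A X"
  unfolding Rmap_def VB_def using Rt_disjoint by blast

lemma inj_on_Rmap: "inj_on (Rmap A) (Pow (SB A))"
proof (rule inj_onI)
  have sub: "X \<subseteq> Y" if X: "X \<subseteq> SB A" and eq: "Rmap A X = Rmap A Y" for X Y
  proof
    fix t assume "t \<in> X"
    then have t: "trail_point A [(t, 0)] \<in> Rt A t"
      using X trail_point_in_Rt[of A "[(t, 0)]"] by auto
    then obtain t' where "t' \<in> Y" "trail_point A [(t, 0)] \<in> Rt A t'"
      using \<open>t \<in> X\<close> eq unfolding Rmap_def by blast
    then show "t \<in> Y" using Rt_disjoint[OF t] by blast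
  qed
  show "X = Y" if "X \<in> Pow (SB A)" "Y \<in> Pow (SB A)" "Rmap A X = Rmap A Y" for X Y
    using sub that by blast
qed

lemma bij_betw_Rmap: "bij_betw (Rmap A) (Pow (SB A)) {X \<in> Cgen A. X \<subseteq> VB A}"
proof (rule bij_betw_imageI)
  show "inj_on (Rmap A) (Pow (SB A))" by (rule inj_on_Rmap)
  show "Rmap A ` Pow (SB A) = {X \<in> Cgen A. X \<subseteq> VB A}"
  proof
    show "Rmap A ` Pow (SB A) \<subseteq> {X \<in> Cgen A. X \<subseteq> VB A}"
      using Rmap_in_Cgen unfolding VB_def Rmap_def by blast
    show "{X \<in> Cgen A. X \<subseteq> VB A} \<subseteq> Rmap A ` Pow (SB A)"
      using Cgen_VB_eq_Rmap by blast
  qed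
qed

lemma Rmap_Tstar:
  assumes X: "X \<subseteq> SB A" and k: "k < 3"
  shows "Rmap A (Tstar A k X) = VB A \<inter> cylU A k (Rmap A X)"
proof
  show "Rmap A (Tstar A k X) \<subseteq> VB A \<inter> cylU A k (Rmap A X)"
  proof
    fix w assume "w \<in> Rmap A (Tstar A k X)"
    then obtain y x where y: "y \<in> SB A" "w \<in> Rt A y" and x: "x \<in> X" "(y, x) \<in> ST A k"
      unfolding Rmap_def Tstar_def by blast
    obtain u where u: "u \<in> Rt A x" "\<forall>l<3. l \<noteq> k \<longrightarrow> tr u l = tr w l"
      using Rt_ST_cylU[OF x(2) k y(2)] by blast
    have "u \<in> Rmap A X" using u(1) x(1) unfolding Rmap_def by blast
    moreover have "w \<in> U3 A" using Rt_subset_U3 y(2) by blast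
    ultimately show "w \<in> VB A \<inter> cylU A k (Rmap A X)"
      using u(2) y unfolding VB_def cylU_def by blast
  qed
  show "VB A \<inter> cylU A k (Rmap A X) \<subseteq> Rmap A (Tstar A k X)"
  proof
    fix w assume w: "w \<in> VB A \<inter> cylU A k (Rmap A X)"
    then obtain y where y: "y \<in> SB A" "w \<in> Rt A y" unfolding VB_def by blast
    obtain x u where x: "x \<in> X" "u \<in> Rt A x" "\<forall>l<3. l \<noteq> k \<longrightarrow> tr u l = tr w l"
      using w unfolding cylU_def Rmap_def by blast
    then have "tr y k = tr x k" using cylU_Rt_ST[OF y(2) x(2) k] by blast
    then have "y \<in> Tstar A k X" using x(1) y(1) X unfolding Tstar_def ST_def by blast
    then show "w \<in> Rmap A (Tstar A k X)" using y(2) unfolding Rmap_def by blast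
  qed
qed

lemma Rmap_SE:
  assumes kl: "k < 3" "l < 3"
  shows "Rmap A (SE A k l) = VB A \<inter> diagU A k l"
proof
  show "Rmap A (SE A k l) \<subseteq> VB A \<inter> diagU A k l"
  proof
    fix w assume "w \<in> Rmap A (SE A k l)"
    then obtain t where t: "t \<in> SE A k l" "w \<in> Rt A t" unfolding Rmap_def by blast
    then have "tr w k = tr w l" "w \<in> U3 A" "t \<in> SB A"
      using Rt_SE_diag[OF t(1) kl t(2)] Rt_subset_U3 SE_SB by blast+
    then show "w \<in> VB A \<inter> diagU A k l" using t(2) unfolding VB_def diagU_def by blast
  qed
  show "VB A \<inter> diagU A k l \<subseteq> Rmap A (SE A k l)"
  proof
    fix w assume w: "w \<in> VB A \<inter> diagU A k l"
    then obtain t where t: "w \<in> Rt A t" unfolding VB_def by blast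
    moreover have "tr w k = tr w l" using w unfolding diagU_def by blast
    ultimately have "t \<in> SE A k l" using Rt_diag_SE[OF t kl] by blast
    then show "w \<in> Rmap A (SE A k l)" using t unfolding Rmap_def by blast
  qed
qed

end

theorem theorem4:
  fixes A :: "'a ra_sig"
  assumes "WA A" and "atomic A"
  shows "cyl_iso (Rmap A) (Cm A) (Rc A)"
proof -
  interpret atomic_wa A using assms by unfold_locales
  have "Tstar A k X \<subseteq> SB A" for k X unfolding Tstar_def by blast
  moreover have "Rmap A {} = {}" "Rmap A (SB A) = VB A" by (simp_all add: Rmap_def VB_eq_Rmap)
  ultimately show ?thesis
    unfolding cyl_iso_def Cm_def Rc_def
    using bij_betw_Rmap by (simp add: Rmap_Un Rmap_Int Rmap_Diff Rmap_Tstar Rmap_SE)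
qed

end
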